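(* Let $\phi,\psi$ be injective endomorphisms of $F_n$. Then the action of $\mathrm{Eq}(\phi,\psi)$ on the set of regular points of $\mathrm{Eq}(\widehat\phi,\widehat\psi)$, by left multiplication, has finitely many orbits.
   Context: $F_n$ is the free group on a finite basis $A$; elements are identified with reduced words over $\widetilde A=A\cup A^{-1}$; maps are written on the right. For reduced words $u,v$, $u\wedge v$ is their longest common prefix. $\widehat F_n$ is the completion of $F_n$ for the prefix metric $d(u,v)=2^{-|u\wedge v|}$ ($u\neq v$), $d(u,u)=0$; it is the set of all finite and infinite reduced words over $\widetilde A$. An injective endomorphism $\phi$ of $F_n$ has a unique continuous extension $\widehat\phi$ to $\widehat F_n$. $\mathrm{Eq}(\phi,\psi)=\{x\in F_n\mid x\phi=x\psi\}$ (a subgroup) and $\mathrm{Eq}(\widehat\phi,\widehat\psi)=\{x\in\widehat F_n\mid x\widehat\phi=x\widehat\psi\}$. The subgroup $\mathrm{Eq}(\phi,\psi)$ acts on $\mathrm{Eq}(\widehat\phi,\widehat\psi)$ by left multiplication $u\cdot\alpha=$ reduced form of $u\alpha$. A point of $\mathrm{Eq}(\widehat\phi,\widehat\psi)$ is singular if it lies in the topological closure of $\mathrm{Eq}(\phi,\psi)$ in $\widehat F_n$, and regular otherwise. *)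

theory Defs
  imports "HOL-Analysis.Analysis"
begin

text \<open>Free group F_n on a finite basis, given by the finite type 'a.
  A letter (a, True) stands for the generator a, (a, False) for its inverse.\<close>

type_synonym 'a letter = "'a \<times> bool"
type_synonym 'a word = "'a letter list"

definition inv1 :: "'a letter \<Rightarrow> 'a letter" where
  "inv1 x = (fst x, \<not> snd x)"

definition reduced :: "'a word \<Rightarrow> bool" where
  "reduced w \<longleftrightarrow> (\<forall>i. Suc i < length w \<longrightarrow> w ! Suc i \<noteq> inv1 (w ! i))"

fun red :: "'a word \<Rightarrow> 'a word" where
  "red [] = []"
| "red (x # w) = (case red w of [] \<Rightarrow> [x]
                   | y # v \<Rightarrow> (if y = inv1 x then v else x # y # v))"

definition winv :: "'a word \<Rightarrow> 'a word" where
  "winv w = rev (map inv1 w)"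

definition mult :: "'a word \<Rightarrow> 'a word \<Rightarrow> 'a word" where
  "mult u v = red (u @ v)"

definition FG :: "'a word set" where
  "FG = {w. reduced w}"

text \<open>The endomorphism of F_n sending each generator a to (the reduced form of) f a.
  Every endomorphism of F_n arises this way.\<close>
definition hom :: "('a \<Rightarrow> 'a word) \<Rightarrow> 'a word \<Rightarrow> 'a word" where
  "hom f w = red (concat (map (\<lambda>x. if snd x then f (fst x) else winv (f (fst x))) w))"

definition inj_endo :: "('a \<Rightarrow> 'a word) \<Rightarrow> bool" where
  "inj_endo f \<longleftrightarrow> inj_on (hom f) FG"

text \<open>Finite and infinite words; the completion is the set of reduced ones.\<close>
datatype 'a fw = Fin "'a word" | Inf "nat \<Rightarrow> 'a letter"

fun letter_at :: "'a fw \<Rightarrow> nat \<Rightarrow> 'a letter option" where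
  "letter_at (Fin w) i = (if i < length w then Some (w ! i) else None)"
| "letter_at (Inf f) i = Some (f i)"

fun valid :: "'a fw \<Rightarrow> bool" where
  "valid (Fin w) = reduced w"
| "valid (Inf f) = (\<forall>i. f (Suc i) \<noteq> inv1 (f i))"

definition hatF :: "'a fw set" where
  "hatF = {x. valid x}"

text \<open>Length of the longest common prefix (for distinct elements).\<close>
definition lcp :: "'a fw \<Rightarrow> 'a fw \<Rightarrow> nat" where
  "lcp x y = (LEAST i. letter_at x i \<noteq> letter_at y i)"

definition dpre :: "'a fw \<Rightarrow> 'a fw \<Rightarrow> real" where
  "dpre x y = (if x = y then 0 else 2 powr (- real (lcp x y)))"

definition Ttop :: "'a fw topology" where
  "Ttop = Metric_space.mtopology hatF dpre"

text \<open>The continuous extension of the endomorphism given by f to the completion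
  (the unique continuous map hatF \<rightarrow> hatF extending it; normalized outside hatF).\<close>
definition hatHom :: "('a \<Rightarrow> 'a word) \<Rightarrow> 'a fw \<Rightarrow> 'a fw" where
  "hatHom f = (THE \<Phi>. continuous_map Ttop Ttop \<Phi>
        \<and> (\<forall>w\<in>FG. \<Phi> (Fin w) = Fin (hom f w))
        \<and> (\<forall>x. x \<notin> hatF \<longrightarrow> \<Phi> x = Fin []))"

definition Eq :: "('a \<Rightarrow> 'a word) \<Rightarrow> ('a \<Rightarrow> 'a word) \<Rightarrow> 'a word set" where
  "Eq f g = {x \<in> FG. hom f x = hom g x}"

definition EqHat :: "('a \<Rightarrow> 'a word) \<Rightarrow> ('a \<Rightarrow> 'a word) \<Rightarrow> 'a fw set" where
  "EqHat f g = {x \<in> hatF. hatHom f x = hatHom g x}"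

text \<open>Left multiplication of a finite word on a (finite or infinite) word, with reduction.
  canc cancels the reversed word r against the start of an infinite word.\<close>
fun canc :: "'a word \<Rightarrow> (nat \<Rightarrow> 'a letter) \<Rightarrow> 'a word \<times> (nat \<Rightarrow> 'a letter)" where
  "canc [] h = ([], h)"
| "canc (x # r) h = (if h 0 = inv1 x then canc r (\<lambda>i. h (Suc i)) else (x # r, h))"

definition prepend :: "'a word \<Rightarrow> (nat \<Rightarrow> 'a letter) \<Rightarrow> nat \<Rightarrow> 'a letter" where
  "prepend w h i = (if i < length w then w ! i else h (i - length w))"

fun act :: "'a word \<Rightarrow> 'a fw \<Rightarrow> 'a fw" where
  "act u (Fin w) = Fin (mult u w)"
| "act u (Inf h) = (case canc (rev (red u)) h of (r, h') \<Rightarrow> Inf (prepend (rev r) h'))"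

definition singular :: "('a \<Rightarrow> 'a word) \<Rightarrow> ('a \<Rightarrow> 'a word) \<Rightarrow> 'a fw set" where
  "singular f g = EqHat f g \<inter> (Ttop closure_of (Fin ` Eq f g))"

definition regular :: "('a \<Rightarrow> 'a word) \<Rightarrow> ('a \<Rightarrow> 'a word) \<Rightarrow> 'a fw set" where
  "regular f g = EqHat f g - (Ttop closure_of (Fin ` Eq f g))"

definition orbit :: "('a \<Rightarrow> 'a word) \<Rightarrow> ('a \<Rightarrow> 'a word) \<Rightarrow> 'a fw \<Rightarrow> 'a fw set" where
  "orbit f g \<alpha> = {act u \<alpha> | u. u \<in> Eq f g}"

end

theory Submission
  imports Defs
begin

text \<open>A regular point is an infinite reduced word h, since a finite point of the equalizer of the
  extensions already lies in the equalizer of f and g. Consider the defects g(h_k)\<inverse> f(h_k) of the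
  prefixes h_k of h. A defect that recurs infinitely often yields elements h_j h_i\<inverse> of the
  equalizer converging to h, so for a regular point the defects eventually become long.
  By Cooper's bounded cancellation lemma, f(h_k) and g(h_k) follow the common image of h up to
  their last C letters. Once the defect is long, which of the two leaves that image first no longer
  changes, and together with the defect it determines the next letter of h. So two regular points
  with equal defect and equal such bit at their first index of long defect have equal tails and
  lie in one orbit. These defects have bounded length, hence there are finitely many orbits.\<close>

lemma finite_image_if_factors:
  assumes "finite (D ` A)" and "\<And>x y. x \<in> A \<Longrightarrow> y \<in> A \<Longrightarrow> D x = D y \<Longrightarrow> F x = F y"
  shows "finite (F ` A)"
proof (rule finite_subset)
  show "F ` A \<subseteq> (\<lambda>d. F (inv_into A D d)) ` D ` A"
  proof
    fix y assume "y \<in> F ` A"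
    then obtain x where x: "x \<in> A" "y = F x" by blast
    have "inv_into A D (D x) \<in> A" "D (inv_into A D (D x)) = D x"
      using x(1) by (auto intro: inv_into_into f_inv_into_f)
    then have "y = F (inv_into A D (D x))" using assms(2) x by metis
    then show "y \<in> (\<lambda>d. F (inv_into A D d)) ` D ` A" using x(1) by blast
  qed
qed (use assms(1) in simp)

section \<open>Reduced words and free reduction\<close>

lemma inv1_inv1[simp]: "inv1 (inv1 x) = x" by (simp add: inv1_def)

lemma inv1_neq[simp]: "inv1 x \<noteq> x" by (cases x) (simp add: inv1_def)

lemma neq_inv1[simp]: "x \<noteq> inv1 x" by (cases x) (simp add: inv1_def)

lemma reduced_Nil[simp]: "reduced []" by (simp add: reduced_def)

lemma reduced_single[simp]: "reduced [x]" by (simp add: reduced_def)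

lemma reduced_Cons_Cons[simp]: "reduced (x # y # v) \<longleftrightarrow> y \<noteq> inv1 x \<and> reduced (y # v)"
  unfolding reduced_def by (auto simp: nth_Cons' less_Suc_eq_0_disj)

lemma reduced_Cons: "reduced (x # w) \<longleftrightarrow> reduced w \<and> (w = [] \<or> hd w \<noteq> inv1 x)"
  by (cases w) auto

lemma reduced_append: "reduced (u @ v) \<longleftrightarrow> reduced u \<and> reduced v
    \<and> (u = [] \<or> v = [] \<or> hd v \<noteq> inv1 (last u))"
proof (induction u)
  case Nil then show ?case by simp
next
  case (Cons x u)
  show ?case
  proof (cases u)
    case Nil then show ?thesis by (cases v) (auto simp: reduced_Cons)
  next
    case (Cons y u')
    then show ?thesis using Cons.IH by (auto simp: reduced_Cons)
  qed
qed

lemma reduced_infix: "reduced (a @ b @ c) \<Longrightarrow> reduced b"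
  by (simp add: reduced_append)

lemma reduced_take: "reduced w \<Longrightarrow> reduced (take n w)"
  by (metis append_take_drop_id reduced_append)

definition cons_red :: "'a letter \<Rightarrow> 'a word \<Rightarrow> 'a word" where
  "cons_red x z = (case z of [] \<Rightarrow> [x] | y # v \<Rightarrow> if y = inv1 x then v else x # y # v)"

lemma red_Cons_cons_red: "red (x # w) = cons_red x (red w)" by (simp add: cons_red_def)

lemma reduced_cons_red: "reduced z \<Longrightarrow> reduced (cons_red x z)"
  by (cases z) (auto simp: cons_red_def reduced_Cons)

lemma red_reduced[simp]: "reduced (red w)"
  by (induction w) (auto simp: red_Cons_cons_red reduced_cons_red simp del: red.simps(2))

lemma red_id: "reduced w \<Longrightarrow> red w = w"
proof (induction w)
  case Nil then show ?case by simp
next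
  case (Cons x w)
  then have "reduced w" by (simp add: reduced_Cons)
  with Cons show ?case
    by (cases w) (auto simp: red_Cons_cons_red cons_red_def simp del: red.simps(2))
qed

lemma red_red[simp]: "red (red w) = red w" by (simp add: red_id)

lemma cons_red_cancel: "reduced z \<Longrightarrow> cons_red x (cons_red (inv1 x) z) = z"
  by (cases z) (auto simp: cons_red_def reduced_Cons split: list.splits)

lemma reduced_foldr_cons_red: "reduced z \<Longrightarrow> reduced (foldr cons_red w z)"
  by (induction w) (auto simp: reduced_cons_red)

lemma foldr_cons_red_cons_red: "reduced w \<Longrightarrow> reduced z
    \<Longrightarrow> foldr cons_red (cons_red x w) z = cons_red x (foldr cons_red w z)"
proof (cases w)
  case Nil then show ?thesis by (simp add: cons_red_def)
next
  case (Cons y v)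
  assume z: "reduced z"
  show ?thesis
  proof (cases "y = inv1 x")
    case True
    then have "cons_red x (foldr cons_red w z)
        = cons_red x (cons_red (inv1 x) (foldr cons_red v z))"
      using Cons by simp
    also have "\<dots> = foldr cons_red v z"
      by (rule cons_red_cancel[OF reduced_foldr_cons_red[OF z]])
    finally show ?thesis using Cons True by (simp add: cons_red_def)
  next
    case False then show ?thesis using Cons by (simp add: cons_red_def)
  qed
qed

lemma foldr_cons_red_red: "reduced z \<Longrightarrow> foldr cons_red u z = foldr cons_red (red u) z"
proof (induction u)
  case Nil then show ?case by simp
next
  case (Cons x u)
  have "foldr cons_red (x # u) z = cons_red x (foldr cons_red (red u) z)" using Cons by simp
  also have "\<dots> = foldr cons_red (cons_red x (red u)) z"
    using foldr_cons_red_cons_red[of "red u" z x] Cons.prems by simp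
  finally show ?case by (simp add: red_Cons_cons_red del: red.simps)
qed

lemma red_append_eq_foldr: "red (u @ v) = foldr cons_red u (red v)"
  by (induction u) (auto simp: red_Cons_cons_red simp del: red.simps(2))

lemma red_append: "red (u @ v) = red (red u @ red v)"
  by (metis foldr_cons_red_red red_append_eq_foldr red_reduced red_red)

lemma red_append_red_left[simp]: "red (red u @ v) = red (u @ v)"
  by (metis red_append red_red)

lemma red_append_red_right[simp]: "red (u @ red v) = red (u @ v)"
  by (metis red_append red_red)

lemma red_append_red_mid: "red (u @ red v @ w) = red (u @ v @ w)"
  by (metis append.assoc red_append_red_left red_append_red_right)

lemma length_red_le: "length (red w) \<le> length w"
proof (induction w)
  case Nil then show ?case by simp
next
  case (Cons x w) then show ?case
    by (auto simp: red_Cons_cons_red cons_red_def simp del: red.simps(2) split: list.splits)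
qed

lemma winv_Nil[simp]: "winv [] = []" by (simp add: winv_def)

lemma winv_Cons: "winv (x # w) = winv w @ [inv1 x]" by (simp add: winv_def)

lemma winv_append: "winv (u @ v) = winv v @ winv u" by (simp add: winv_def)

lemma winv_winv[simp]: "winv (winv w) = w" by (simp add: winv_def rev_map comp_def)

lemma length_winv[simp]: "length (winv w) = length w" by (simp add: winv_def)

lemma winv_eq_Nil[simp]: "winv w = [] \<longleftrightarrow> w = []" by (simp add: winv_def)

lemma last_winv: "w \<noteq> [] \<Longrightarrow> last (winv w) = inv1 (hd w)"
  by (cases w) (auto simp: winv_def)

lemma reduced_winv: "reduced w \<Longrightarrow> reduced (winv w)"
proof (induction w)
  case Nil then show ?case by simp
next
  case (Cons x w)
  then have rw: "reduced w" by (simp add: reduced_Cons)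
  show ?case unfolding winv_Cons reduced_append
    using Cons rw by (auto simp: last_winv reduced_Cons)
qed

lemma reduced_winv_iff[simp]: "reduced (winv w) \<longleftrightarrow> reduced w"
  by (metis reduced_winv winv_winv)

lemma red_inv1_Cons_Cons: "red (inv1 x # x # w) = red w"
  by (simp add: red_Cons_cons_red cons_red_cancel del: red.simps)
    (metis inv1_inv1 cons_red_cancel red_reduced)

lemma red_winv_append_self[simp]: "red (winv w @ w) = []"
proof (induction w)
  case Nil then show ?case by simp
next
  case (Cons x w)
  have "red (winv (x # w) @ x # w) = red (winv w @ red (inv1 x # x # w))"
    by (simp add: winv_Cons del: red.simps)
  also have "\<dots> = red (winv w @ w)" by (simp only: red_inv1_Cons_Cons red_append_red_right)
  finally show ?case using Cons by simp
qed

lemma red_append_winv_self[simp]: "red (w @ winv w) = []"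
  using red_winv_append_self[of "winv w"] by simp

lemma red_winv_append_cancel: "red (winv w @ w @ x) = red x"
  by (metis append.assoc red_append_red_left red_winv_append_self append_Nil)

lemma red_append_winv_cancel: "red (w @ winv w @ x) = red x"
  by (metis append.assoc red_append_red_left red_append_winv_self append_Nil)

lemma red_winv: "red (winv w) = winv (red w)"
proof -
  have "red (winv w) = red (winv w @ red (w @ winv (red w)))"
    by (metis append_Nil2 red_append_red_left red_append_red_right red_append_winv_self)
  also have "\<dots> = red (winv w @ w @ winv (red w))" by (simp add: red_append_red_mid)
  also have "\<dots> = winv (red w)" by (simp add: red_winv_append_cancel red_id)
  finally show ?thesis .
qed

lemma red_append_decomp:
  assumes "reduced u" "reduced v"
  shows "\<exists>u' t v'. u = u' @ t \<and> v = winv t @ v' \<and> red (u @ v) = u' @ v' \<and> reduced (u' @ v')"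
  using assms(1)
proof (induction u)
  case Nil
  then show ?case using assms(2) by (intro exI[of _ "[]"] exI[of _ v]) (simp add: red_id)
next
  case (Cons x u0)
  then have r0: "reduced u0" by (simp add: reduced_Cons)
  from Cons.IH[OF r0] obtain a t b where ab: "u0 = a @ t" "v = winv t @ b" "red (u0 @ v) = a @ b"
    "reduced (a @ b)"
    by blast
  have eq: "red ((x # u0) @ v) = cons_red x (a @ b)"
    using ab by (simp add: red_Cons_cons_red del: red.simps(2))
  show ?case
  proof (cases a)
    case (Cons y a')
    then have "y \<noteq> inv1 x" using Cons.prems ab by (simp add: reduced_Cons)
    then have "cons_red x (a @ b) = x # a @ b" using Cons by (simp add: cons_red_def)
    moreover have "reduced (x # a @ b)"
      using ab \<open>y \<noteq> inv1 x\<close> Cons by (simp add: reduced_Cons)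
    ultimately show ?thesis using eq ab by (intro exI[of _ "x # a"] exI[of _ t] exI[of _ b]) simp
  next
    case Nil
    show ?thesis
    proof (cases b)
      case Nil2: Nil
      then show ?thesis
        using eq ab Nil by (intro exI[of _ "[x]"] exI[of _ t] exI[of _ b]) (simp add: cons_red_def)
    next
      case (Cons y b')
      show ?thesis
      proof (cases "y = inv1 x")
        case True
        then show ?thesis using eq ab Nil Cons
          by (intro exI[of _ "[]"] exI[of _ "x # t"] exI[of _ b'])
            (auto simp: cons_red_def winv_Cons reduced_Cons)
      next
        case False
        then show ?thesis using eq ab Nil Cons
          by (intro exI[of _ "[x]"] exI[of _ t] exI[of _ b]) (auto simp: cons_red_def reduced_Cons)
      qed
    qed
  qed
qed

lemma length_red_append_ge: "reduced u \<Longrightarrow> reduced v \<Longrightarrow> length (red (u @ v)) + length v \<ge> length u"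
  using red_append_decomp[of u v] by auto

lemma red_winv_append_cancel_mid: "red (a @ winv w @ w @ b) = red (a @ b)"
  by (metis red_winv_append_cancel red_append_red_right)

lemma red_append_winv_cancel_mid: "red (a @ w @ winv w @ b) = red (a @ b)"
  by (metis red_append_winv_cancel red_append_red_right)

section \<open>Common prefixes and the word metric\<close>

fun lcp_len :: "'b list \<Rightarrow> 'b list \<Rightarrow> nat" where
  "lcp_len (x # xs) (y # ys) = (if x = y then Suc (lcp_len xs ys) else 0)"
| "lcp_len _ _ = 0"

lemma lcp_len_ge_iff: "n \<le> lcp_len xs ys \<longleftrightarrow> n \<le> length xs \<and> n \<le> length ys \<and> take n xs = take n ys"
proof (induction xs ys arbitrary: n rule: lcp_len.induct)
  case (1 x xs y ys)
  then show ?case by (cases n) auto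
qed auto

lemma lcp_len_le1: "lcp_len xs ys \<le> length xs" using lcp_len_ge_iff by blast

lemma lcp_len_le2: "lcp_len xs ys \<le> length ys" using lcp_len_ge_iff by blast

lemma lcp_len_take: "take (lcp_len xs ys) xs = take (lcp_len xs ys) ys"
  using lcp_len_ge_iff by blast

lemma lcp_len_nth: "i < lcp_len a b \<Longrightarrow> a ! i = b ! i"
  by (metis lcp_len_take nth_take)

lemma lcp_len_commute: "lcp_len xs ys = lcp_len ys xs"
  by (metis lcp_len_ge_iff le_antisym order_refl)

lemma lcp_len_nth_neq: "lcp_len xs ys < length xs \<Longrightarrow> lcp_len xs ys < length ys
    \<Longrightarrow> xs ! lcp_len xs ys \<noteq> ys ! lcp_len xs ys"
proof (induction xs ys rule: lcp_len.induct)
  case (1 x xs y ys) then show ?case by (cases "x = y") auto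
qed auto

lemma lcp_len_min_le: "min (lcp_len a b) (lcp_len b c) \<le> lcp_len a c"
  unfolding lcp_len_ge_iff
  by (metis (no_types, lifting) lcp_len_ge_iff min.cobounded1 min.cobounded2 min_def take_take)

lemma lcp_len_append_same[simp]: "lcp_len (p @ a) (p @ b) = length p + lcp_len a b"
  by (induction p) auto

lemma lcp_len_prefix1[simp]: "lcp_len p (p @ b) = length p"
  using lcp_len_append_same[of p "[]" b] by simp

lemma red_winv_append_lcp:
  assumes "reduced A" "reduced B"
  shows "red (winv A @ B) = winv (drop (lcp_len A B) A) @ drop (lcp_len A B) B"
proof -
  define c where "c = lcp_len A B"
  define p where "p = take c A"
  have A: "A = p @ drop c A" by (simp add: p_def)
  have "take c B = p" using lcp_len_take[of A B] by (simp add: p_def c_def)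
  then have B: "B = p @ drop c B" by (metis append_take_drop_id)
  have "winv A @ B = winv (drop c A) @ winv p @ p @ drop c B"
  proof -
    have "winv A @ B = winv (p @ drop c A) @ (p @ drop c B)" using A B by metis
    then show ?thesis by (simp add: winv_append)
  qed
  then have "red (winv A @ B) = red (winv (drop c A) @ drop c B)"
    by (metis red_winv_append_cancel red_append_red_right)
  also have "\<dots> = winv (drop c A) @ drop c B"
  proof (rule red_id)
    have rA: "reduced (drop c A)" and rB: "reduced (drop c B)"
      using assms A B reduced_append by metis+
    have "hd (drop c B) \<noteq> hd (drop c A)" if "drop c A \<noteq> []" "drop c B \<noteq> []"
      using that lcp_len_nth_neq[of A B] by (simp add: c_def hd_drop_conv_nth)
    then show "reduced (winv (drop c A) @ drop c B)"
      using rA rB by (auto simp: reduced_append last_winv)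
  qed
  finally show ?thesis by (simp add: c_def)
qed

definition wdist :: "'a word \<Rightarrow> 'a word \<Rightarrow> nat" where
  "wdist x y = length (red (winv x @ y))"

lemma wdist_lcp: "reduced A \<Longrightarrow> reduced B \<Longrightarrow> wdist A B = length A + length B - 2 * lcp_len A B"
  using lcp_len_le1[of A B] lcp_len_le2[of A B] by (simp add: wdist_def red_winv_append_lcp)

lemma wdist_commute: "wdist x y = wdist y x"
proof -
  have "red (winv y @ x) = winv (red (winv x @ y))"
    by (simp add: red_winv[symmetric] winv_append)
  then show ?thesis by (simp add: wdist_def)
qed

lemma wdist_triangle: "wdist x z \<le> wdist x y + wdist y z"
proof -
  have "red (winv x @ z) = red (winv x @ y @ winv y @ z)" by (simp add: red_append_winv_cancel_mid)
  also have "\<dots> = red (red (winv x @ y) @ red (winv y @ z))"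
    by (metis append.assoc red_append)
  finally have "wdist x z \<le> length (red (winv x @ y) @ red (winv y @ z))"
    unfolding wdist_def by (metis length_red_le)
  then show ?thesis by (simp add: wdist_def)
qed

lemma wdist_self[simp]: "wdist x x = 0" by (simp add: wdist_def)

lemma wdist_red_append_left: "wdist (red (w @ x)) (red (w @ y)) = wdist x y"
proof -
  have "red (winv (red (w @ x)) @ red (w @ y)) = red (winv x @ winv w @ w @ y)"
    by (simp add: red_winv[symmetric] winv_append
        red_append_red_mid[where u="winv x @ winv w", simplified])
  also have "\<dots> = red (winv x @ y)" by (metis red_winv_append_cancel red_append_red_right)
  finally show ?thesis by (simp add: wdist_def)
qed

text \<open>In the Cayley tree, the geodesic from 1 to g m is covered by the geodesics between consecutive
  points of the path.\<close>
lemma prefix_close_to_path: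
  assumes "\<forall>i<m. wdist (g i) (g (Suc i)) \<le> L" "g 0 = []" "\<forall>i\<le>m. reduced (g i)" "p \<le> length (g m)"
  shows "\<exists>i\<le>m. wdist (take p (g m)) (g i) \<le> L"
  using assms
proof (induction m arbitrary: p)
  case 0 then show ?case by simp
next
  case (Suc m)
  define c where "c = lcp_len (g m) (g (Suc m))"
  show ?case
  proof (cases "p \<le> c")
    case True
    then have "p \<le> length (g m)" "take p (g (Suc m)) = take p (g m)"
      using lcp_len_ge_iff[of c "g m" "g (Suc m)"]
        by (auto simp: c_def) (metis min.absorb1 take_take)
    then show ?thesis using Suc.IH[of p] Suc.prems by (metis le_SucI less_SucI)
  next
    case False
    define P where "P = take p (g (Suc m))"
    have lP: "length P = p" using Suc.prems by (simp add: P_def)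
    have "c \<le> lcp_len P (g m)"
      unfolding lcp_len_ge_iff using False lcp_len_ge_iff[of c "g m" "g (Suc m)"]
      by (auto simp: c_def P_def lP)
    moreover have "\<not> Suc c \<le> lcp_len P (g m)"
    proof
      assume "Suc c \<le> lcp_len P (g m)"
      then have "Suc c \<le> length (g m)" "take (Suc c) (g m) = take (Suc c) (g (Suc m))"
        "Suc c \<le> length (g (Suc m))"
        unfolding lcp_len_ge_iff using False Suc.prems by (auto simp: P_def)
      then have "Suc c \<le> c" unfolding c_def using lcp_len_ge_iff by blast
      then show False by simp
    qed
    ultimately have lc: "lcp_len P (g m) = c" by simp
    have rP: "reduced P" using Suc.prems by (simp add: P_def reduced_take)
    have "wdist P (g m) = p + length (g m) - 2 * c"
      using wdist_lcp[OF rP, of "g m"] Suc.prems lc lP by simp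
    also have "\<dots> \<le> length (g m) + length (g (Suc m)) - 2 * c" using Suc.prems by simp
    also have "\<dots> = wdist (g m) (g (Suc m))"
      using wdist_lcp[of "g m" "g (Suc m)"] Suc.prems by (simp add: c_def)
    also have "\<dots> \<le> L" using Suc.prems by simp
    finally show ?thesis by (auto simp: P_def intro: exI[of _ m])
  qed
qed

section \<open>Endomorphisms and bounded cancellation\<close>

definition letter_img :: "('a \<Rightarrow> 'a word) \<Rightarrow> 'a letter \<Rightarrow> 'a word" where
  "letter_img f x = (if snd x then f (fst x) else winv (f (fst x)))"

lemma hom_letter_img: "hom f w = red (concat (map (letter_img f) w))"
  by (simp add: hom_def letter_img_def[abs_def])

lemma hom_Nil[simp]: "hom f [] = []" by (simp add: hom_letter_img)

lemma hom_append: "hom f (u @ v) = red (hom f u @ hom f v)"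
  by (simp add: hom_letter_img)

lemma hom_reduced[simp]: "reduced (hom f w)" by (simp add: hom_letter_img)

lemma letter_img_inv1: "letter_img f (inv1 x) = winv (letter_img f x)"
  by (simp add: letter_img_def inv1_def)

lemma concat_map_letter_img_winv: "concat (map (letter_img f) (winv w))
    = winv (concat (map (letter_img f) w))"
  by (induction w) (auto simp: winv_Cons winv_append letter_img_inv1)

lemma hom_winv: "hom f (winv w) = winv (hom f w)"
  by (simp add: hom_letter_img concat_map_letter_img_winv red_winv)

lemma hom_Cons: "hom f (x # w) = red (letter_img f x @ hom f w)"
  by (simp add: hom_letter_img del: red.simps(2))

lemma hom_cons_red: "hom f (cons_red x w) = hom f (x # w)"
proof (cases w)
  case Nil then show ?thesis by (simp add: cons_red_def)
next
  case (Cons y v)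
  show ?thesis
  proof (cases "y = inv1 x")
    case True
    have "hom f (x # w) = red (letter_img f x @ red (winv (letter_img f x) @ hom f v))"
      using Cons True by (simp add: hom_Cons letter_img_inv1 del: red.simps(2))
    also have "\<dots> = red (letter_img f x @ winv (letter_img f x) @ hom f v)"
      by (rule red_append_red_right)
    also have "\<dots> = hom f v" by (simp add: red_append_winv_cancel red_id)
    finally show ?thesis using Cons True by (simp add: cons_red_def)
  next
    case False then show ?thesis using Cons by (simp add: cons_red_def)
  qed
qed

lemma hom_red: "hom f (red w) = hom f w"
proof (induction w)
  case Nil then show ?case by simp
next
  case (Cons x w)
  have "hom f (red (x # w)) = hom f (x # red w)"
    by (simp only: red_Cons_cons_red hom_cons_red red_reduced)
  also have "\<dots> = red (letter_img f x @ hom f (red w))" by (rule hom_Cons)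
  also have "\<dots> = hom f (x # w)" using Cons by (simp add: hom_Cons del: red.simps(2))
  finally show ?case .
qed

lemma hom_winv_append_cancel: "hom f (winv a @ a @ b) = hom f b"
  by (metis hom_red red_winv_append_cancel)

lemma hom_mult: "hom f (mult u v) = mult (hom f u) (hom f v)"
  by (simp add: mult_def hom_red hom_append)

definition img_size :: "('a::finite \<Rightarrow> 'a word) \<Rightarrow> nat" where
  "img_size f = (\<Sum>x\<in>UNIV. length (letter_img f x))"

lemma length_letter_img_le: "length (letter_img f x) \<le> img_size f"
  unfolding img_size_def by (rule member_le_sum) auto

lemma length_hom_le: "length (hom f w) \<le> img_size f * length w"
proof -
  have "length (concat (map (letter_img f) w)) \<le> img_size f * length w"
  proof (induction w)
    case (Cons x w) then show ?case using length_letter_img_le[of f x] by simp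
  qed simp
  then show ?thesis unfolding hom_letter_img using length_red_le order_trans by blast
qed

lemma length_hom_single_le: "length (hom f [x]) \<le> img_size f"
  using length_hom_le[of f "[x]"] by simp

lemma inj_endo_bounded_preimage:
  fixes f :: "'a::finite \<Rightarrow> 'a word"
  assumes "inj_endo f"
  shows "\<exists>M. \<forall>w. reduced w \<longrightarrow> length (hom f w) \<le> R \<longrightarrow> length w \<le> M"
proof -
  let ?S = "{w. reduced w \<and> length (hom f w) \<le> R}"
  have "hom f ` ?S \<subseteq> {xs. set xs \<subseteq> UNIV \<and> length xs \<le> R}" by auto
  moreover have "finite {xs :: 'a word. set xs \<subseteq> UNIV \<and> length xs \<le> R}"
    by (rule finite_lists_length_le) simp
  ultimately have "finite (hom f ` ?S)" by (rule finite_subset)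
  moreover have "inj_on (hom f) ?S" using assms unfolding inj_endo_def FG_def
    by (rule inj_on_subset) auto
  ultimately have "finite ?S" using finite_imageD by blast
  then have "finite (length ` ?S)" by simp
  then obtain M where "\<forall>n\<in>length ` ?S. n \<le> M"
    using finite_nat_set_iff_bounded_le by blast
  then show ?thesis by auto
qed

lemma wdist_hom: "wdist (hom f a) (hom f b) = length (hom f (winv a @ b))"
  by (simp add: wdist_def hom_append hom_winv)

lemma wdist_hom_take_Suc_le:
  fixes f :: "'a::finite \<Rightarrow> 'a word"
  assumes "i < length u"
  shows "wdist (hom f (take i u)) (hom f (take (Suc i) u)) \<le> img_size f"
proof -
  have "take (Suc i) u = take i u @ [u ! i]" using assms by (simp add: take_Suc_conv_app_nth)
  then have "wdist (hom f (take i u)) (hom f (take (Suc i) u)) = length (hom f [u ! i])"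
    by (simp add: wdist_hom hom_winv_append_cancel[where b="[u ! i]", simplified])
  then show ?thesis using length_hom_single_le by simp
qed

lemma prefix_hom_close_to_hom_take:
  fixes f :: "'a::finite \<Rightarrow> 'a word"
  assumes "p \<le> length (hom f u)"
  shows "\<exists>i\<le>length u. wdist (take p (hom f u)) (hom f (take i u)) \<le> img_size f"
proof -
  have "\<forall>i<length u. wdist (hom f (take i u)) (hom f (take (Suc i) u)) \<le> img_size f"
    using wdist_hom_take_Suc_le by blast
  then show ?thesis
    using prefix_close_to_path[of "length u" "\<lambda>i. hom f (take i u)" "img_size f" p] assms
      by simp
qed

lemma wdist_hom_take_append: "wdist (hom f (take i u)) (hom f (u @ w))
    = length (hom f (drop i u @ w))"
  by (metis append_take_drop_id append.assoc hom_winv_append_cancel wdist_hom)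

definition bounded_cancellation :: "('a \<Rightarrow> 'a word) \<Rightarrow> nat \<Rightarrow> bool" where
  "bounded_cancellation f C
      \<longleftrightarrow> (\<forall>u v. reduced (u @ v) \<longrightarrow> (\<exists>U' T V'. hom f u = U' @ T \<and> hom f v = winv T @ V'
       \<and> hom f (u @ v) = U' @ V' \<and> length T \<le> C))"

text \<open>Write f u = U' T and f v = T\<inverse> V'. Following the
  images of the prefixes of u and of v, which move by at most L = img_size f at each step, we find
  prefixes of u and of v whose images lie within L of U' and of U' T\<inverse>. The part of u v between
  them is a reduced word whose image has length at most 2 L, so by injectivity it is shorter than
  a constant M, and then T is bounded by L + L M.\<close>
lemma bounded_cancellation_exists:
  fixes f :: "'a::finite \<Rightarrow> 'a word"
  assumes "inj_endo f"
  shows "\<exists>C. bounded_cancellation f C"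
proof -
  define L where "L = img_size f"
  obtain M where M: "\<And>w. reduced w \<Longrightarrow> length (hom f w) \<le> 2 * L \<Longrightarrow> length w \<le> M"
    using inj_endo_bounded_preimage[OF assms, of "2 * L"] by blast
  have "bounded_cancellation f (L + L * M)" unfolding bounded_cancellation_def
  proof (intro allI impI)
    fix u v :: "'a word" assume ruv: "reduced (u @ v)"
    define U where "U = hom f u"
    obtain U' T V' where d: "U = U' @ T" "hom f v = winv T @ V'" "red (U @ hom f v) = U' @ V'"
        "reduced (U' @ V')"
      using red_append_decomp[of U "hom f v"] by (auto simp: U_def)
    have rU': "reduced U'" using d reduced_append by blast
    obtain i where i: "i \<le> length u" "wdist U' (hom f (take i u)) \<le> L"
      using prefix_hom_close_to_hom_take[of "length U'" f u] d by (auto simp: U_def L_def)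
    obtain j where j: "wdist (winv T) (hom f (take j v)) \<le> L"
      using prefix_hom_close_to_hom_take[of "length T" f v] d by (auto simp: L_def)
    have "red (U @ winv T) = U'"
      using d rU' by (simp add: red_append_winv_cancel_mid[where b="[]", simplified] red_id)
    then have "wdist U' (red (U @ hom f (take j v))) \<le> L"
      using j wdist_red_append_left[of U "winv T" "hom f (take j v)"] by simp
    then have "wdist (hom f (take i u)) (red (U @ hom f (take j v))) \<le> 2 * L"
      using wdist_triangle[of "hom f (take i u)" "red (U @ hom f (take j v))" U'] i(2)
        wdist_commute[of U' "hom f (take i u)"] by linarith
    then have "wdist (hom f (take i u)) (hom f (u @ take j v)) \<le> 2 * L"
      by (simp add: U_def hom_append)
    moreover have "reduced (drop i u @ take j v)"
      using ruv reduced_infix[of "take i u" "drop i u @ take j v" "drop j v"]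
      by (metis append_take_drop_id append.assoc)
    ultimately have di: "length u - i \<le> M"
      using M[of "drop i u @ take j v"] by (simp add: wdist_hom_take_append)
    have "length T = wdist U' U"
      using wdist_lcp[OF rU', of U] d by (simp add: U_def)
    also have "\<dots> \<le> wdist U' (hom f (take i u)) + wdist (hom f (take i u)) U"
      by (rule wdist_triangle)
    also have "wdist (hom f (take i u)) U = length (hom f (drop i u))"
      using wdist_hom_take_append[of f i u "[]"] by (simp add: U_def)
    also have "\<dots> \<le> L * (length u - i)"
      using length_hom_le[of f "drop i u"] by (simp add: L_def mult.commute)
    also have "\<dots> \<le> L * M" using di by simp
    finally have "length T \<le> L + L * M" using i(2) by simp
    then show "\<exists>U' T V'. hom f u = U' @ T \<and> hom f v = winv T @ V' \<and> hom f (u @ v) = U' @ V'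
        \<and> length T \<le> L + L * M"
      using d by (auto simp: U_def hom_append)
  qed
  then show ?thesis by blast
qed

lemma bounded_cancellation_mono: "bounded_cancellation f C \<Longrightarrow> C \<le> C' \<Longrightarrow> bounded_cancellation f C'"
  unfolding bounded_cancellation_def by (meson order_trans)

lemma bounded_cancellation_lcp_prefix:
  assumes "bounded_cancellation f C" "reduced (u @ v)"
  shows "length (hom f u) - C \<le> lcp_len (hom f u) (hom f (u @ v))"
proof -
  obtain U' T V' where d: "hom f u = U' @ T" "hom f v = winv T @ V'" "hom f (u @ v) = U' @ V'"
    "length T \<le> C"
    using assms unfolding bounded_cancellation_def by blast
  have "length U' \<le> lcp_len (hom f u) (hom f (u @ v))" using d by simp
  then show ?thesis using d by simp
qed

lemma bounded_cancellation_lcp_branches: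
  assumes "bounded_cancellation f C" "reduced (winv a @ b)"
  shows "lcp_len (hom f a) (hom f b) \<le> C"
proof -
  obtain U' T V' where d: "hom f (winv a) = U' @ T" "hom f b = winv T @ V'"
    "hom f (winv a @ b) = U' @ V'" "length T \<le> C"
    using assms unfolding bounded_cancellation_def by blast
  let ?A = "hom f a" and ?B = "hom f b"
  have e: "red (winv ?A @ ?B) = U' @ V'" using d by (simp add: hom_append hom_winv)
  have "length (red (winv ?A @ ?B)) = length ?A + length ?B - 2 * lcp_len ?A ?B"
    using wdist_lcp[of ?A ?B] by (simp add: wdist_def)
  moreover have "length ?A = length U' + length T"
    using arg_cong[OF d(1), of length] by (simp add: hom_winv)
  moreover have "length ?B = length T + length V'" using d by simp
  ultimately have "lcp_len ?A ?B = length T"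
    using e lcp_len_le1[of ?A ?B] lcp_len_le2[of ?A ?B] by simp
  then show ?thesis using d by simp
qed

section \<open>Infinite words and the prefix metric\<close>

definition itake :: "(nat \<Rightarrow> 'b) \<Rightarrow> nat \<Rightarrow> 'b list" where
  "itake h k = map h [0..<k]"

definition idrop :: "(nat \<Rightarrow> 'b) \<Rightarrow> nat \<Rightarrow> nat \<Rightarrow> 'b" where
  "idrop h k = (\<lambda>i. h (k + i))"

lemma length_itake[simp]: "length (itake h k) = k" by (simp add: itake_def)

lemma nth_itake[simp]: "i < k \<Longrightarrow> itake h k ! i = h i" by (simp add: itake_def)

lemma itake_0[simp]: "itake h 0 = []" by (simp add: itake_def)

lemma itake_Suc: "itake h (Suc k) = itake h k @ [h k]" by (simp add: itake_def)

lemma itake_Suc_Cons: "itake h (Suc c) = h 0 # itake (idrop h 1) c"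
  by (induction c) (auto simp: itake_Suc idrop_def)

lemma hd_itake: "0 < m \<Longrightarrow> hd (itake g m) = g 0"
  by (simp add: itake_def hd_map upt_conv_Cons)

lemma itake_add: "itake h (k + n) = itake h k @ itake (idrop h k) n"
  by (induction n) (simp_all add: itake_Suc idrop_def)

lemma itake_split: "k \<le> K \<Longrightarrow> itake h K = itake h k @ itake (idrop h k) (K - k)"
  using itake_add[of h k "K - k"] by simp

lemma take_itake: "n \<le> k \<Longrightarrow> take n (itake h k) = itake h n"
  by (simp add: itake_def take_map)

lemma itake_eq_nth: "itake g N = itake g' N \<Longrightarrow> i < N \<Longrightarrow> g i = g' i"
  by (metis nth_itake)

lemma idrop_idrop: "idrop (idrop h a) b = idrop h (a + b)"
  by (simp add: idrop_def add.assoc)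

lemma itake_prepend: "itake (prepend a g) (length a + n) = a @ itake g n"
  by (rule nth_equalityI) (auto simp: prepend_def nth_append)

lemma prepend_itake_idrop: "prepend (itake h j) (idrop h j) = h"
  by (rule ext) (simp add: prepend_def idrop_def)

lemma reduced_itake: "valid (Inf h) \<Longrightarrow> reduced (itake h k)"
  by (simp add: reduced_def)

lemma valid_idrop: "valid (Inf h) \<Longrightarrow> valid (Inf (idrop h k))"
  by (simp add: idrop_def)

lemma valid_Inf_if_reduced_itake: "(\<And>n. \<exists>N\<ge>n. reduced (itake g N)) \<Longrightarrow> valid (Inf g)"
proof -
  assume a: "\<And>n. \<exists>N\<ge>n. reduced (itake g N)"
  have "g (Suc i) \<noteq> inv1 (g i)" for i
  proof -
    obtain N where N: "N \<ge> Suc (Suc i)" "reduced (itake g N)" using a by blast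
    then show ?thesis unfolding reduced_def by (metis Suc_le_lessD nth_itake length_itake Suc_lessD)
  qed
  then show ?thesis by simp
qed

fun fw_take :: "'a fw \<Rightarrow> nat \<Rightarrow> 'a word" where
  "fw_take (Fin w) k = take k w"
| "fw_take (Inf h) k = itake h k"

lemma reduced_fw_take: "valid x \<Longrightarrow> reduced (fw_take x k)"
  by (cases x) (auto simp: reduced_take reduced_itake)

lemma length_fw_take_le: "length (fw_take x K) \<le> K"
  by (cases x) auto

definition agree :: "'a fw \<Rightarrow> 'a fw \<Rightarrow> nat \<Rightarrow> bool" where
  "agree x y n \<longleftrightarrow> (\<forall>i<n. letter_at x i = letter_at y i)"

lemma agree_mono: "agree x y n \<Longrightarrow> m \<le> n \<Longrightarrow> agree x y m"
  by (auto simp: agree_def)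

lemma agree_sym: "agree x y n \<Longrightarrow> agree y x n"
  by (auto simp: agree_def)

lemma agree_trans: "agree x y n \<Longrightarrow> agree y z n \<Longrightarrow> agree x z n"
  by (auto simp: agree_def)

lemma fw_eqI:
  assumes "\<And>i. letter_at x i = letter_at y i"
  shows "x = y"
proof (cases x; cases y)
  fix w w' assume xy: "x = Fin w" "y = Fin w'"
  have "length w = length w'"
    using assms[of "length w"] assms[of "length w'"] xy by (auto split: if_splits)
  moreover have "w ! i = w' ! i" if "i < length w" for i
    using assms[of i] xy that \<open>length w = length w'\<close> by simp
  ultimately show "x = y" using xy by (simp add: nth_equalityI)
next
  fix h h' assume "x = Inf h" "y = Inf h'"
  then show "x = y" using assms by auto
next
  fix w h assume "x = Fin w" "y = Inf h"
  then show "x = y" using assms[of "length w"] by simp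
next
  fix h w assume "x = Inf h" "y = Fin w"
  then show "x = y" using assms[of "length w"] by simp
qed

lemma letter_at_Fin_fw_take: "letter_at (Fin (fw_take x K)) i
    = (if i < K then letter_at x i else None)"
  by (cases x) auto

lemma agree_fw_take:
  assumes "agree x y K"
  shows "fw_take x K = fw_take y K"
proof -
  have "letter_at (Fin (fw_take x K)) i = letter_at (Fin (fw_take y K)) i" for i
    unfolding letter_at_Fin_fw_take using assms by (simp add: agree_def)
  then show ?thesis using fw_eqI by blast
qed

lemma agree_None_eq: "agree a x n \<Longrightarrow> letter_at a m = None \<Longrightarrow> m < n \<Longrightarrow> a = x"
proof (rule fw_eqI)
  fix i assume a: "agree a x n" "letter_at a m = None" "m < n"
  obtain w where aw: "a = Fin w" "length w \<le> m" using a(2) by (cases a) (auto split: if_splits)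
  have "letter_at x m = None" using a unfolding agree_def by metis
  then obtain w' where xw: "x = Fin w'" "length w' \<le> m" by (cases x) (auto split: if_splits)
  show "letter_at a i = letter_at x i"
  proof (cases "i < n")
    case True then show ?thesis using a unfolding agree_def by blast
  next
    case False then show ?thesis using aw xw a(3) by auto
  qed
qed

lemma lcp_props:
  assumes "x \<noteq> y"
  shows "agree x y (lcp x y)" "letter_at x (lcp x y) \<noteq> letter_at y (lcp x y)"
proof -
  have ex: "\<exists>i. letter_at x i \<noteq> letter_at y i" using assms fw_eqI by blast
  show "letter_at x (lcp x y) \<noteq> letter_at y (lcp x y)"
    unfolding lcp_def by (rule LeastI_ex[OF ex])
  show "agree x y (lcp x y)" unfolding agree_def lcp_def using not_less_Least by blast
qed

lemma agree_iff_lcp: "agree x y n \<longleftrightarrow> (x = y \<or> n \<le> lcp x y)"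
proof
  assume a: "agree x y n"
  show "x = y \<or> n \<le> lcp x y"
  proof (rule ccontr)
    assume "\<not> (x = y \<or> n \<le> lcp x y)"
    then show False using lcp_props[of x y] a unfolding agree_def by auto
  qed
next
  assume "x = y \<or> n \<le> lcp x y"
  then show "agree x y n"
  proof (cases "x = y")
    case True then show ?thesis by (simp add: agree_def)
  next
    case False then show ?thesis
      using lcp_props(1)[OF False] agree_mono \<open>x = y \<or> n \<le> lcp x y\<close> by blast
  qed
qed

lemma lcp_commute: "lcp x y = lcp y x"
  unfolding lcp_def by (simp add: eq_commute)

lemma dpre_less_iff: "dpre x y < 2 powr - real n \<longleftrightarrow> agree x y (Suc n)"
proof (cases "x = y")
  case True then show ?thesis by (simp add: dpre_def agree_def)
next
  case False
  have d: "dpre x y = 2 powr - real (lcp x y)" using False by (simp add: dpre_def)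
  have "(2::real) powr - real (lcp x y) < 2 powr - real n \<longleftrightarrow> - real (lcp x y) < - real n"
    by (rule powr_less_cancel_iff) simp
  also have "\<dots> \<longleftrightarrow> Suc n \<le> lcp x y" by linarith
  finally show ?thesis using False agree_iff_lcp d by metis
qed

lemma dpre_le_agree: "agree x y n \<Longrightarrow> dpre x y \<le> 2 powr - real n"
proof -
  assume "agree x y n"
  then have "x = y \<or> n \<le> lcp x y" using agree_iff_lcp by blast
  then show ?thesis
  proof
    assume "x = y" then show ?thesis by (simp add: dpre_def)
  next
    assume n: "n \<le> lcp x y"
    have "dpre x y \<le> 2 powr - real (lcp x y)" by (simp add: dpre_def)
    also have "\<dots> \<le> 2 powr - real n" by (rule powr_mono) (use n in auto)
    finally show ?thesis .
  qed
qed

lemma powr_neg_nat_less: "0 < (e::real) \<Longrightarrow> \<exists>n. 2 powr - real n < e"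
proof -
  assume e: "0 < e"
  obtain n where n: "inverse e < 2 ^ n" using real_arch_pow[of 2 "inverse e"] by auto
  have "2 powr - real n = inverse (2 ^ n)" by (simp add: powr_minus powr_realpow)
  also have "\<dots> < inverse (inverse e)" by (rule less_imp_inverse_less[OF n]) (simp add: e)
  also have "\<dots> = e" by simp
  finally show ?thesis by blast
qed

lemma Metric_space_hatF: "Metric_space hatF dpre"
proof
  fix x y show "0 \<le> dpre x y" by (simp add: dpre_def)
  show "dpre x y = dpre y x" by (simp add: dpre_def lcp_commute)
  show "dpre x y = 0 \<longleftrightarrow> x = y" by (simp add: dpre_def)
next
  fix x y z :: "'a fw"
  show "dpre x z \<le> dpre x y + dpre y z"
  proof (cases "x = y \<or> y = z \<or> x = z")
    case True then show ?thesis by (auto simp: dpre_def)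
  next
    case False
    then have "agree x y (lcp x y)" "agree y z (lcp y z)" using lcp_props by auto
    then have "agree x z (min (lcp x y) (lcp y z))"
      using agree_mono agree_trans by (meson min.cobounded1 min.cobounded2)
    then have "min (lcp x y) (lcp y z) \<le> lcp x z" using False agree_iff_lcp by blast
    then have "dpre x z \<le> 2 powr - real (min (lcp x y) (lcp y z))"
      using False by (simp add: dpre_def)
    also have "\<dots> \<le> dpre x y + dpre y z"
    proof -
      have d1: "dpre x y = 2 powr - real (lcp x y)" "dpre y z = 2 powr - real (lcp y z)"
        using False by (auto simp: dpre_def)
      have p: "0 \<le> (2::real) powr t" for t by simp
      show ?thesis
      proof (cases "lcp x y \<le> lcp y z")
        case True then have "min (lcp x y) (lcp y z) = lcp x y" by simp
        then show ?thesis unfolding d1 using p[of "- real (lcp y z)"] by simp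
      next
        case False then have "min (lcp x y) (lcp y z) = lcp y z" by simp
        then show ?thesis unfolding d1 using p[of "- real (lcp x y)"] by simp
      qed
    qed
    finally show ?thesis .
  qed
qed

lemma Hausdorff_space_Ttop: "Hausdorff_space Ttop"
  unfolding Ttop_def by (rule Metric_space.Hausdorff_space_mtopology[OF Metric_space_hatF])

lemma Inf_in_closure_of_Fin:
  assumes v: "valid (Inf h)" and S: "S \<subseteq> FG" and H: "\<And>n. \<exists>w\<in>S. agree (Fin w) (Inf h) n"
  shows "Inf h \<in> Ttop closure_of (Fin ` S)"
  unfolding Ttop_def Metric_space.metric_closure_of[OF Metric_space_hatF]
proof (intro CollectI conjI allI impI)
  show "Inf h \<in> hatF" using v by (simp add: hatF_def)
  fix r :: real assume r: "0 < r"
  obtain n where n: "2 powr - real n < r" using powr_neg_nat_less[OF r] by blast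
  obtain w where w: "w \<in> S" "agree (Fin w) (Inf h) n" using H by blast
  have "dpre (Inf h) (Fin w) \<le> 2 powr - real n" using dpre_le_agree[OF agree_sym[OF w(2)]] .
  then have "dpre (Inf h) (Fin w) < r" using n by linarith
  moreover have "Fin w \<in> hatF" using w S by (auto simp: FG_def hatF_def)
  ultimately show "\<exists>y\<in>Fin ` S. y \<in> Metric_space.mball hatF dpre (Inf h) r"
    using w \<open>Inf h \<in> hatF\<close>
      by (auto simp: Metric_space.in_mball[OF Metric_space_hatF])
qed

lemma hatF_subset_closure_of_FG: "hatF \<subseteq> Ttop closure_of (Fin ` FG)"
proof
  fix x assume x: "x \<in> hatF"
  show "x \<in> Ttop closure_of (Fin ` FG)"
  proof (cases x)
    case (Fin w)
    have "Fin ` FG \<subseteq> topspace Ttop"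
      unfolding Ttop_def Metric_space.topspace_mtopology[OF Metric_space_hatF]
      by (auto simp: FG_def hatF_def)
    then show ?thesis using x Fin closure_of_subset by (fastforce simp: FG_def hatF_def)
  next
    case (Inf h)
    have "agree (Fin (itake h n)) (Inf h) n" for n by (simp add: agree_def)
    moreover have "itake h n \<in> FG" for n
      using x Inf by (simp add: FG_def hatF_def reduced_itake)
    ultimately show ?thesis using Inf_in_closure_of_Fin[of h FG] x Inf by (auto simp: hatF_def)
  qed
qed

section \<open>The continuous extension of an injective endomorphism\<close>

definition cancel_const :: "('a::finite \<Rightarrow> 'a word) \<Rightarrow> nat" where
  "cancel_const f = (SOME C. bounded_cancellation f C)"

definition preimage_len :: "('a::finite \<Rightarrow> 'a word) \<Rightarrow> nat \<Rightarrow> nat" where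
  "preimage_len f R = (SOME M. \<forall>w. reduced w \<longrightarrow> length (hom f w) \<le> R \<longrightarrow> length w \<le> M)"

definition long_len :: "('a::finite \<Rightarrow> 'a word) \<Rightarrow> nat \<Rightarrow> nat" where
  "long_len f n = Suc (preimage_len f (n + cancel_const f))"

lemma bounded_cancellation_cancel_const: "inj_endo f \<Longrightarrow> bounded_cancellation f (cancel_const f)"
  unfolding cancel_const_def by (rule someI_ex[OF bounded_cancellation_exists])

lemma length_le_preimage_len: "inj_endo f \<Longrightarrow> reduced w \<Longrightarrow> length (hom f w) \<le> R
    \<Longrightarrow> length w \<le> preimage_len f R"
proof -
  assume a: "inj_endo f" "reduced w" "length (hom f w) \<le> R"
  have "\<forall>w. reduced w \<longrightarrow> length (hom f w) \<le> R \<longrightarrow> length w \<le> preimage_len f R"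
    unfolding preimage_len_def by (rule someI_ex[OF inj_endo_bounded_preimage[OF a(1)]])
  then show ?thesis using a by blast
qed

lemma cancel_const_less_length_hom: "inj_endo f \<Longrightarrow> reduced w \<Longrightarrow> long_len f n \<le> length w
    \<Longrightarrow> n + cancel_const f < length (hom f w)"
  using length_le_preimage_len[of f w "n + cancel_const f"] unfolding long_len_def by linarith

text \<open>The i-th letter of the image of an infinite word h is read off the image of a prefix of h so
  long that bounded cancellation protects its first i letters.\<close>
definition hom_ext_seq :: "('a::finite \<Rightarrow> 'a word) \<Rightarrow> (nat \<Rightarrow> 'a letter) \<Rightarrow> nat \<Rightarrow> 'a letter" where
  "hom_ext_seq f h = (\<lambda>i. hom f (itake h (long_len f i)) ! i)"

definition hom_ext :: "('a::finite \<Rightarrow> 'a word) \<Rightarrow> 'a fw \<Rightarrow> 'a fw" where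
  "hom_ext f x = (if valid x then (case x of Fin w \<Rightarrow> Fin (hom f w)
       | Inf h \<Rightarrow> Inf (hom_ext_seq f h)) else Fin [])"

lemma hom_ext_Fin: "reduced w \<Longrightarrow> hom_ext f (Fin w) = Fin (hom f w)"
  by (simp add: hom_ext_def)

lemma hom_ext_Inf: "valid (Inf h) \<Longrightarrow> hom_ext f (Inf h) = Inf (hom_ext_seq f h)"
  by (simp add: hom_ext_def)

lemma nth_hom_itake_stable:
  assumes "inj_endo f" "valid (Inf h)" "k \<le> K" "i + cancel_const f < length (hom f (itake h k))"
  shows "hom f (itake h K) ! i = hom f (itake h k) ! i" "i < length (hom f (itake h K))"
proof -
  have "reduced (itake h k @ itake (idrop h k) (K - k))"
    using itake_split[OF assms(3)] reduced_itake[OF assms(2)] by metis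
  then have "length (hom f (itake h k)) - cancel_const f
      \<le> lcp_len (hom f (itake h k)) (hom f (itake h K))"
    using bounded_cancellation_lcp_prefix[OF bounded_cancellation_cancel_const[OF assms(1)]]
      itake_split[OF assms(3)]
      by metis
  then have il: "i < lcp_len (hom f (itake h k)) (hom f (itake h K))" using assms(4) by linarith
  then show "hom f (itake h K) ! i = hom f (itake h k) ! i" using lcp_len_nth by metis
  show "i < length (hom f (itake h K))" using il lcp_len_le2 less_le_trans by blast
qed

lemma letter_at_hom_ext:
  assumes "inj_endo f" "valid x" "i + cancel_const f < length (hom f (fw_take x k))"
  shows "letter_at (hom_ext f x) i = Some (hom f (fw_take x k) ! i)"
proof (cases x)
  case (Fin w)
  have rw: "reduced (take k w @ drop k w)" using assms Fin by simp
  have "length (hom f (take k w)) - cancel_const f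
      \<le> lcp_len (hom f (take k w)) (hom f (take k w @ drop k w))"
    by (rule bounded_cancellation_lcp_prefix[OF bounded_cancellation_cancel_const[OF assms(1)] rw])
  then have il: "i < lcp_len (hom f (take k w)) (hom f w)" using assms(3) Fin by simp
  then have "i < length (hom f w)" using lcp_len_le2 less_le_trans by blast
  then show ?thesis using il Fin assms lcp_len_nth[OF il] by (simp add: hom_ext_def)
next
  case (Inf h)
  define K where "K = max k (long_len f i)"
  have v: "valid (Inf h)" using assms Inf by simp
  have e1: "hom f (itake h K) ! i = hom f (itake h k) ! i"
    using nth_hom_itake_stable(1)[OF assms(1) v, of k K i] assms(3) Inf by (simp add: K_def)
  have l2: "i + cancel_const f < length (hom f (itake h (long_len f i)))"
    using cancel_const_less_length_hom[OF assms(1) reduced_itake[OF v], of i "long_len f i"] by simp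
  have e2: "hom f (itake h K) ! i = hom f (itake h (long_len f i)) ! i"
    using nth_hom_itake_stable(1)[OF assms(1) v _ l2, of K] by (simp add: K_def)
  show ?thesis using e1 e2 Inf v by (simp add: hom_ext_def hom_ext_seq_def)
qed

lemma valid_hom_ext:
  assumes "inj_endo f" "valid x" shows "valid (hom_ext f x)"
proof (cases x)
  case (Fin w) then show ?thesis using assms by (simp add: hom_ext_def)
next
  case (Inf h)
  have v: "valid (Inf h)" using assms Inf by simp
  obtain g where g: "hom_ext f x = Inf g" using Inf v by (simp add: hom_ext_def)
  have "g (Suc i) \<noteq> inv1 (g i)" for i
  proof -
    define K where "K = long_len f (Suc i)"
    have l: "Suc i + cancel_const f < length (hom f (fw_take x K))"
      using cancel_const_less_length_hom[OF assms(1) reduced_itake[OF v], of "Suc i" K] Inf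
        by (simp add: K_def)
    have a1: "letter_at (hom_ext f x) (Suc i) = Some (hom f (fw_take x K) ! Suc i)"
      using letter_at_hom_ext[OF assms l] .
    have a0: "letter_at (hom_ext f x) i = Some (hom f (fw_take x K) ! i)"
      using letter_at_hom_ext[OF assms, of i K] l by simp
    have "reduced (hom f (fw_take x K))" by simp
    then have "hom f (fw_take x K) ! Suc i \<noteq> inv1 (hom f (fw_take x K) ! i)"
      using l unfolding reduced_def by simp
    then show ?thesis using a0 a1 g by simp
  qed
  then show ?thesis using g by simp
qed

lemma agree_hom_ext:
  assumes inj: "inj_endo f" and va: "valid a" "valid x" and ag: "agree a x (Suc (long_len f n))"
  shows "agree (hom_ext f a) (hom_ext f x) (Suc n)"
proof (cases "length (fw_take a (long_len f n)) = long_len f n")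
  case True
  define K where "K = long_len f n"
  have pe: "fw_take a K = fw_take x K"
    using ag by (intro agree_fw_take) (auto simp: K_def agree_def)
  have l: "n + cancel_const f < length (hom f (fw_take a K))"
    using cancel_const_less_length_hom[OF inj reduced_fw_take[OF va(1)], of n K] True
      by (simp add: K_def)
  show ?thesis unfolding agree_def
  proof (intro allI impI)
    fix i assume "i < Suc n"
    then have li: "i + cancel_const f < length (hom f (fw_take a K))" using l by simp
    show "letter_at (hom_ext f a) i = letter_at (hom_ext f x) i"
      using letter_at_hom_ext[OF inj va(1) li] letter_at_hom_ext[OF inj va(2), of i K] li pe by simp
  qed
next
  case False
  then obtain w where "a = Fin w" "length w < long_len f n"
    using length_fw_take_le le_neq_implies_less by (cases a) fastforce+
  then have "a = x" using agree_None_eq[OF ag, of "length w"] by simp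
  then show ?thesis by (simp add: agree_def)
qed

lemma continuous_map_hom_ext:
  assumes inj: "inj_endo f"
  shows "continuous_map Ttop Ttop (hom_ext f)"
  unfolding Ttop_def
proof (subst Metric_space.metric_continuous_map[OF Metric_space_hatF Metric_space_hatF],
    intro conjI ballI allI impI)
  show "hom_ext f ` hatF \<subseteq> hatF" using valid_hom_ext[OF inj] by (auto simp: hatF_def)
next
  fix a :: "'a fw" and e :: real assume a: "a \<in> hatF" and e: "0 < e"
  obtain n where n: "2 powr - real n < e" using powr_neg_nat_less[OF e] by blast
  define K where "K = long_len f n"
  show "\<exists>\<delta>>0. \<forall>x. x \<in> hatF \<and> dpre a x < \<delta> \<longrightarrow> dpre (hom_ext f a) (hom_ext f x) < e"
  proof (intro exI[of _ "2 powr - real K"] conjI allI impI)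
    show "0 < (2::real) powr - real K" by simp
    fix x assume x: "x \<in> hatF \<and> dpre a x < 2 powr - real K"
    then have "agree a x (Suc K)" using dpre_less_iff by blast
    then have "agree (hom_ext f a) (hom_ext f x) (Suc n)"
      using agree_hom_ext[OF inj] a x by (simp add: hatF_def K_def)
    then have "dpre (hom_ext f a) (hom_ext f x) < 2 powr - real n" by (simp only: dpre_less_iff)
    then show "dpre (hom_ext f a) (hom_ext f x) < e" using n by linarith
  qed
qed

lemma hatHom_eq_hom_ext:
  assumes inj: "inj_endo f"
  shows "hatHom f = hom_ext f"
  unfolding hatHom_def
proof (rule the_equality)
  show "continuous_map Ttop Ttop (hom_ext f) \<and> (\<forall>w\<in>FG. hom_ext f (Fin w) = Fin (hom f w))
      \<and> (\<forall>x. x \<notin> hatF \<longrightarrow> hom_ext f x = Fin [])"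
    using continuous_map_hom_ext[OF inj] by (auto simp: hom_ext_def FG_def hatF_def)
next
  fix P assume P: "continuous_map Ttop Ttop P \<and> (\<forall>w\<in>FG. P (Fin w) = Fin (hom f w))
      \<and> (\<forall>x. x \<notin> hatF \<longrightarrow> P x = Fin [])"
  show "P = hom_ext f"
  proof
    fix x
    show "P x = hom_ext f x"
    proof (cases "x \<in> hatF")
      case True
      then have "x \<in> Ttop closure_of (Fin ` FG)" using hatF_subset_closure_of_FG by blast
      moreover have "P y = hom_ext f y" if "y \<in> Fin ` FG" for y
        using P that by (auto simp: hom_ext_def FG_def)
      ultimately show ?thesis
        using forall_in_closure_of_eq[of x Ttop "Fin ` FG" Ttop P "hom_ext f"] Hausdorff_space_Ttop
          P continuous_map_hom_ext[OF inj] by blast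
    qed (use P in \<open>simp add: hom_ext_def hatF_def\<close>)
  qed
qed

section \<open>Left multiplication on infinite words\<close>

lemma canc_eq:
  "canc r h = (r', h') \<Longrightarrow> \<exists>c. r = map inv1 (itake h c) @ r' \<and> h' = idrop h c
      \<and> (r' = [] \<or> h' 0 \<noteq> inv1 (hd r'))"
proof (induction r h rule: canc.induct)
  case (1 h) then show ?case by (intro exI[of _ 0]) (auto simp: idrop_def)
next
  case (2 x r h)
  show ?case
  proof (cases "h 0 = inv1 x")
    case True
    have sh: "(\<lambda>i. h (Suc i)) = idrop h 1" by (simp add: idrop_def)
    have "canc r (idrop h 1) = (r', h')" using 2(2) True sh by simp
    then obtain c where c: "r = map inv1 (itake (idrop h 1) c) @ r'" "h' = idrop (idrop h 1) c"
      "r' = [] \<or> h' 0 \<noteq> inv1 (hd r')"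
      using 2(1)[OF True] sh by auto
    show ?thesis
      using c True by (intro exI[of _ "Suc c"]) (simp add: itake_Suc_Cons idrop_idrop)
  next
    case False
    then show ?thesis using 2(2) by (intro exI[of _ 0]) (auto simp: idrop_def)
  qed
qed

lemma act_Inf_decomp:
  assumes v: "valid (Inf h)"
  obtains a c where "act u (Inf h) = Inf (prepend a (idrop h c))" "red u = a @ winv (itake h c)"
    "\<And>n. reduced (a @ itake (idrop h c) n)"
proof -
  obtain r' h' where ch: "canc (rev (red u)) h = (r', h')" by (metis surj_pair)
  obtain c where c: "rev (red u) = map inv1 (itake h c) @ r'" "h' = idrop h c"
    "r' = [] \<or> h' 0 \<noteq> inv1 (hd r')"
    using canc_eq[OF ch] by blast
  define a where "a = rev r'"
  have ru: "red u = a @ winv (itake h c)"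
    using arg_cong[OF c(1), of rev] by (simp add: a_def winv_def)
  have ra: "reduced a" using ru reduced_append red_reduced by metis
  have "reduced (a @ itake h' n)" for n
  proof -
    have "hd (itake h' n) \<noteq> inv1 (last a)" if "a \<noteq> []" "itake h' n \<noteq> []"
    proof -
      have "r' \<noteq> []" using that a_def by simp
      then have "h' 0 \<noteq> inv1 (hd r')" using c(3) by simp
      moreover have "hd (itake h' n) = h' 0" using that by (simp add: itake_def hd_map)
      moreover have "last a = hd r'"
        using \<open>r' \<noteq> []\<close> by (simp add: a_def last_rev)
      ultimately show ?thesis by simp
    qed
    then show ?thesis using ra reduced_itake[OF valid_idrop[OF v]] reduced_append c(2) by blast
  qed
  moreover have "act u (Inf h) = Inf (prepend a h')" using ch by (simp add: a_def)
  ultimately show ?thesis using that ru c(2) by blast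
qed

lemma act_Inf_prefixes:
  assumes v: "valid (Inf h)"
  shows "\<exists>h2. act u (Inf h) = Inf h2 \<and> valid (Inf h2) \<and>
     (\<forall>K\<ge>length (red u). red (u @ itake h K) = itake h2 (length (red (u @ itake h K)))
        \<and> K \<le> length (red (u @ itake h K)) + length (red u))"
proof -
  obtain a c where act: "act u (Inf h) = Inf (prepend a (idrop h c))"
      and ru: "red u = a @ winv (itake h c)" and r: "\<And>n. reduced (a @ itake (idrop h c) n)"
    using act_Inf_decomp[OF v, where u=u] by blast
  have lc: "c \<le> length (red u)" using ru by simp
  have main: "red (u @ itake h K) = itake (prepend a (idrop h c)) (length a + (K - c))"
    if K: "K \<ge> length (red u)" for K
  proof -
    have "red (u @ itake h K) = red (red u @ itake h K)" by simp
    also have "\<dots> = red (a @ winv (itake h c) @ itake h c @ itake (idrop h c) (K - c))"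
      using itake_split[of c K h] ru lc K by simp
    also have "\<dots> = a @ itake (idrop h c) (K - c)"
      by (simp add: red_winv_append_cancel_mid red_id r)
    finally show ?thesis by (simp add: itake_prepend)
  qed
  have "valid (Inf (prepend a (idrop h c)))"
  proof (rule valid_Inf_if_reduced_itake)
    fix n
    show "\<exists>N\<ge>n. reduced (itake (prepend a (idrop h c)) N)"
      using r[of n] by (intro exI[of _ "length a + n"]) (simp add: itake_prepend)
  qed
  then show ?thesis
    using act main lc by (intro exI[of _ "prepend a (idrop h c)"]) auto
qed

lemma act_Inf_eqI:
  assumes v: "valid (Inf h)"
    and H: "\<And>n. \<exists>K\<ge>length (red u). n \<le> length (red (u @ itake h K))
        \<and> red (u @ itake h K) = itake g (length (red (u @ itake h K)))"
  shows "act u (Inf h) = Inf g"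
proof -
  obtain h2 where h2: "act u (Inf h) = Inf h2"
    "\<forall>K\<ge>length (red u). red (u @ itake h K) = itake h2 (length (red (u @ itake h K)))
        \<and> K \<le> length (red (u @ itake h K)) + length (red u)"
    using act_Inf_prefixes[OF v, of u] by blast
  have "h2 i = g i" for i
  proof -
    obtain K where K: "K \<ge> length (red u)" "Suc i \<le> length (red (u @ itake h K))"
      "red (u @ itake h K) = itake g (length (red (u @ itake h K)))"
      using H by blast
    then have "itake h2 (length (red (u @ itake h K))) = itake g (length (red (u @ itake h K)))"
      using h2(2) by metis
    then show ?thesis using K(2) itake_eq_nth by (metis Suc_le_lessD)
  qed
  then show ?thesis using h2 by auto
qed

lemma act_mult:
  assumes v: "valid (Inf h)"
  shows "act (mult u v) (Inf h) = act u (act v (Inf h))"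
proof -
  obtain h1 where h1: "act v (Inf h) = Inf h1" "valid (Inf h1)"
    "\<forall>K\<ge>length (red v). red (v @ itake h K) = itake h1 (length (red (v @ itake h K)))
        \<and> K \<le> length (red (v @ itake h K)) + length (red v)"
    using act_Inf_prefixes[OF v, of v] by blast
  obtain h2 where h2: "act u (Inf h1) = Inf h2"
    "\<forall>K\<ge>length (red u). red (u @ itake h1 K) = itake h2 (length (red (u @ itake h1 K)))
        \<and> K \<le> length (red (u @ itake h1 K)) + length (red u)"
    using act_Inf_prefixes[OF h1(2), of u] by blast
  have "act (mult u v) (Inf h) = Inf h2"
  proof (rule act_Inf_eqI[OF v])
    fix n
    define K where "K = n + length (red u) + length (red v) + length (red (mult u v))"
    define L1 where "L1 = length (red (v @ itake h K))"
    have e1: "red (v @ itake h K) = itake h1 L1" and l1: "K \<le> L1 + length (red v)"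
      using h1(3) by (auto simp: K_def L1_def)
    have L1u: "length (red u) \<le> L1" using l1 by (simp add: K_def)
    have e2: "red (u @ itake h1 L1) = itake h2 (length (red (u @ itake h1 L1)))"
      and l2: "L1 \<le> length (red (u @ itake h1 L1)) + length (red u)"
      using h2(2) L1u by auto
    have eq: "red (mult u v @ itake h K) = red (u @ itake h1 L1)"
    proof -
      have "red (mult u v @ itake h K) = red (u @ v @ itake h K)" by (simp add: mult_def)
      also have "\<dots> = red (u @ red (v @ itake h K))" by simp
      finally show ?thesis using e1 by simp
    qed
    show "\<exists>K\<ge>length (red (mult u v)). n \<le> length (red (mult u v @ itake h K))
        \<and> red (mult u v @ itake h K) = itake h2 (length (red (mult u v @ itake h K)))"
      using eq e2 l1 l2 by (intro exI[of _ K]) (auto simp: K_def)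
  qed
  then show ?thesis using h1 h2 by simp
qed

lemma act_winv_itake:
  assumes v: "valid (Inf h)"
  shows "act (winv (itake h i)) (Inf h) = Inf (idrop h i)"
proof (rule act_Inf_eqI[OF v])
  fix n
  have r: "red (winv (itake h i)) = winv (itake h i)"
    using reduced_itake[OF v] by (simp add: red_id)
  have e: "red (winv (itake h i) @ itake h (n + i)) = itake (idrop h i) n"
  proof -
    have "red (winv (itake h i) @ itake h (n + i))
        = red (winv (itake h i) @ itake h i @ itake (idrop h i) n)"
      using itake_add[of h i n] by (simp add: add.commute)
    also have "\<dots> = red (itake (idrop h i) n)" by (rule red_winv_append_cancel)
    also have "\<dots> = itake (idrop h i) n"
      using reduced_itake[OF valid_idrop[OF v]] by (simp add: red_id)
    finally show ?thesis .
  qed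
  show "\<exists>K\<ge>length (red (winv (itake h i))). n \<le> length (red (winv (itake h i) @ itake h K)) \<and>
          red (winv (itake h i) @ itake h K)
            = itake (idrop h i) (length (red (winv (itake h i) @ itake h K)))"
    using e r by (intro exI[of _ "n + i"]) simp
qed

lemma act_prepend:
  assumes vg: "valid (Inf (prepend b g))" and v: "valid (Inf g)"
  shows "act b (Inf g) = Inf (prepend b g)"
proof (rule act_Inf_eqI[OF v])
  fix n
  have "reduced (b @ itake g n)" for n
    using reduced_itake[OF vg, of "length b + n"] by (simp add: itake_prepend)
  then have "red b = b" "red (b @ itake g (n + length b)) = b @ itake g (n + length b)"
    using reduced_append red_id by blast+
  then show "\<exists>K\<ge>length (red b). n \<le> length (red (b @ itake g K))
      \<and> red (b @ itake g K) = itake (prepend b g) (length (red (b @ itake g K)))"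
    using itake_prepend[of b g "n + length b"] by (intro exI[of _ "n + length b"]) simp
qed

lemma mult_in_Eq: "u \<in> Eq f g \<Longrightarrow> v \<in> Eq f g \<Longrightarrow> mult u v \<in> Eq f g"
  using hom_mult[of f u v] hom_mult[of g u v] by (simp add: Eq_def FG_def mult_def)

lemma winv_in_Eq: "u \<in> Eq f g \<Longrightarrow> winv u \<in> Eq f g"
  by (simp add: Eq_def FG_def hom_winv)

lemma orbit_act_eq:
  assumes v: "valid (Inf h)" and w: "w \<in> Eq f g"
  shows "orbit f g (act w (Inf h)) = orbit f g (Inf h)"
proof
  show "orbit f g (act w (Inf h)) \<subseteq> orbit f g (Inf h)"
  proof
    fix y assume "y \<in> orbit f g (act w (Inf h))"
    then obtain u where u: "u \<in> Eq f g" "y = act u (act w (Inf h))" by (auto simp: orbit_def)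
    then have "y = act (mult u w) (Inf h)" using act_mult[OF v] by simp
    then show "y \<in> orbit f g (Inf h)" using mult_in_Eq[OF u(1) w] by (auto simp: orbit_def)
  qed
next
  show "orbit f g (Inf h) \<subseteq> orbit f g (act w (Inf h))"
  proof
    fix y assume "y \<in> orbit f g (Inf h)"
    then obtain u where u: "u \<in> Eq f g" "y = act u (Inf h)" by (auto simp: orbit_def)
    have "mult (mult u (winv w)) w = red u"
      using red_winv_append_cancel_mid[of u w "[]"] by (simp add: mult_def)
    then have "act u (Inf h) = act (mult (mult u (winv w)) w) (Inf h)" by simp
    also have "\<dots> = act (mult u (winv w)) (act w (Inf h))" by (rule act_mult[OF v])
    finally have "y = act (mult u (winv w)) (act w (Inf h))" using u by simp
    then show "y \<in> orbit f g (act w (Inf h))"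
      using mult_in_Eq[OF u(1) winv_in_Eq[OF w]] by (auto simp: orbit_def)
  qed
qed

lemma agree_mult_itake_winv_itake:
  assumes v: "valid (Inf h)" and ij: "i \<le> j"
  shows "agree (Fin (mult (itake h j) (winv (itake h i)))) (Inf h) (j - i)"
proof -
  obtain u' t v' where d: "itake h j = u' @ t" "winv (itake h i) = winv t @ v'"
      "red (itake h j @ winv (itake h i)) = u' @ v'"
    using red_append_decomp[OF reduced_itake[OF v] reduced_winv[OF reduced_itake[OF v]]] by blast
  have "length t \<le> i" using arg_cong[OF d(2), of length] by simp
  then have lu: "j - i \<le> length u'" using arg_cong[OF d(1), of length] by simp
  show ?thesis unfolding agree_def
  proof (intro allI impI)
    fix k assume k: "k < j - i"
    then have "k < length u'" using lu by simp
    moreover have "u' ! k = h k" using d(1) k \<open>k < length u'\<close>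
      by (metis nth_append nth_itake length_append less_le_trans le_add1 diff_le_self ij lu)
    ultimately show "letter_at (Fin (mult (itake h j) (winv (itake h i)))) k = letter_at (Inf h) k"
      using d(3) by (simp add: mult_def nth_append)
  qed
qed

section \<open>Defects and tracks\<close>

definition defect :: "('a \<Rightarrow> 'a word) \<Rightarrow> ('a \<Rightarrow> 'a word) \<Rightarrow> 'a word \<Rightarrow> 'a word" where
  "defect f g a = red (winv (hom g a) @ hom f a)"

lemma defect_Nil[simp]: "defect f g [] = []" by (simp add: defect_def)

lemma defect_append: "defect f g (a @ s) = red (winv (hom g s) @ defect f g a @ hom f s)"
proof -
  have "defect f g (a @ s) = red (red (winv (hom g s) @ winv (hom g a)) @ red (hom f a @ hom f s))"
    by (simp add: defect_def hom_append red_winv[symmetric] winv_append)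
  also have "\<dots> = red (winv (hom g s) @ winv (hom g a) @ hom f a @ hom f s)"
    by (metis append.assoc red_append)
  also have "\<dots> = red (winv (hom g s) @ defect f g a @ hom f s)"
    unfolding defect_def
      using red_append_red_mid[of "winv (hom g s)" "winv (hom g a) @ hom f a" "hom f s"] by simp
  finally show ?thesis .
qed

lemma defect_swap: "defect g f a = winv (defect f g a)"
  by (simp add: defect_def red_winv[symmetric] winv_append)

lemma length_defect: "length (defect f g a) = length (hom g a) + length (hom f a)
    - 2 * lcp_len (hom g a) (hom f a)"
  unfolding defect_def using wdist_lcp[of "hom g a" "hom f a"] by (simp add: wdist_def)

lemma length_defect_snoc_le:
  fixes f g :: "'a::finite \<Rightarrow> 'a word"
  shows "length (defect f g (a @ [x])) \<le> length (defect f g a) + 2 * max (img_size f) (img_size g)"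
proof -
  have "length (defect f g (a @ [x])) \<le> length (winv (hom g [x]) @ defect f g a @ hom f [x])"
    unfolding defect_append by (rule length_red_le)
  also have "\<dots> \<le> img_size g + length (defect f g a) + img_size f"
    using length_hom_single_le[of g x] length_hom_single_le[of f x] by simp
  finally show ?thesis by simp
qed

lemma mult_winv_in_Eq_if_defect_eq:
  assumes "reduced a" "reduced b" "defect f g a = defect f g b"
  shows "mult b (winv a) \<in> Eq f g"
proof -
  let ?Pa = "hom f a" and ?Qa = "hom g a" and ?Pb = "hom f b" and ?Qb = "hom g b"
  have "hom f (mult b (winv a)) = red (?Pb @ winv ?Pa)"
    by (simp only: hom_mult) (simp add: hom_winv mult_def)
  also have "\<dots> = red (?Qb @ winv ?Qb @ ?Pb @ winv ?Pa)" by (simp add: red_append_winv_cancel)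
  also have "\<dots> = red (?Qb @ red (winv ?Qb @ ?Pb) @ winv ?Pa)"
    by (simp add: red_append_red_mid)
  also have "\<dots> = red (?Qb @ red (winv ?Qa @ ?Pa) @ winv ?Pa)"
    using assms(3) by (simp add: defect_def)
  also have "\<dots> = red (?Qb @ winv ?Qa @ ?Pa @ winv ?Pa)" by (simp add: red_append_red_mid)
  also have "\<dots> = red (?Qb @ winv ?Qa)"
    using red_append_winv_cancel_mid[of "?Qb @ winv ?Qa" ?Pa "[]"] by simp
  also have "\<dots> = hom g (mult b (winv a))"
    by (simp only: hom_mult) (simp add: hom_winv mult_def)
  finally show ?thesis using assms by (simp add: Eq_def FG_def mult_def)
qed

definition track_len :: "(nat \<Rightarrow> 'b) \<Rightarrow> 'b list \<Rightarrow> nat" where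
  "track_len \<gamma> w = lcp_len w (itake \<gamma> (length w))"

lemma track_len_ge_iff: "n \<le> track_len \<gamma> w \<longleftrightarrow> n \<le> length w \<and> take n w = itake \<gamma> n"
  unfolding track_len_def lcp_len_ge_iff by (auto simp: take_itake)

lemma track_len_le: "track_len \<gamma> w \<le> length w" using track_len_ge_iff by blast

lemma nth_track_len_neq: "track_len \<gamma> w < length w \<Longrightarrow> w ! track_len \<gamma> w \<noteq> \<gamma> (track_len \<gamma> w)"
  using lcp_len_nth_neq[of w "itake \<gamma> (length w)"] unfolding track_len_def by simp

lemma take_track_len: "take (track_len \<gamma> w) w = itake \<gamma> (track_len \<gamma> w)"
  using track_len_ge_iff by blast

lemma min_track_len_le_lcp_len: "min (track_len \<gamma> X) (track_len \<gamma> Y) \<le> lcp_len X Y"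
proof -
  let ?n = "min (track_len \<gamma> X) (track_len \<gamma> Y)"
  have "?n \<le> track_len \<gamma> X" "?n \<le> track_len \<gamma> Y" by auto
  then show ?thesis unfolding lcp_len_ge_iff track_len_ge_iff by auto
qed

lemma lcp_len_eq_track_len: "track_len \<gamma> X < track_len \<gamma> Y \<Longrightarrow> lcp_len X Y = track_len \<gamma> X"
proof -
  assume lt: "track_len \<gamma> X < track_len \<gamma> Y"
  let ?a = "track_len \<gamma> X"
  have ge: "?a \<le> lcp_len X Y" using min_track_len_le_lcp_len[of \<gamma> X Y] lt by simp
  have "\<not> Suc ?a \<le> lcp_len X Y"
  proof
    assume s: "Suc ?a \<le> lcp_len X Y"
    then have lX: "?a < length X" using lcp_len_le1[of X Y] by auto
    have "X ! ?a = Y ! ?a" using s lcp_len_nth by (metis Suc_le_lessD)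
    moreover have "Y ! ?a = \<gamma> ?a"
    proof -
      have "take (track_len \<gamma> Y) Y = itake \<gamma> (track_len \<gamma> Y)"
        by (rule take_track_len)
      then show ?thesis using lt by (metis nth_take nth_itake)
    qed
    moreover have "X ! ?a \<noteq> \<gamma> ?a" using nth_track_len_neq lX by blast
    ultimately show False by simp
  qed
  then show ?thesis using ge by simp
qed

lemma lcp_len_eq_min_track_len: "track_len \<gamma> X \<noteq> track_len \<gamma> Y
    \<Longrightarrow> lcp_len X Y = min (track_len \<gamma> X) (track_len \<gamma> Y)"
  by (metis lcp_len_commute lcp_len_eq_track_len linorder_neqE_nat min.absorb1 min.absorb2
      order.strict_implies_order)

lemma red_winv_append_shared_prefix:
  assumes rA: "reduced A" and rB: "reduced B" and rA': "reduced A'"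
    and lt1: "track_len \<gamma> A < track_len \<gamma> B" and lt2: "track_len \<gamma> B \<le> track_len \<gamma> A'"
      and lB: "length B \<le> track_len \<gamma> B + C"
  shows "length (red (winv A @ B)) - C \<le> lcp_len (red (winv A @ A')) (red (winv A @ B))"
proof -
  let ?q = "track_len \<gamma> A" and ?p = "track_len \<gamma> B"
  have c1: "lcp_len A B = ?q" using lcp_len_eq_track_len[OF lt1] .
  have c2: "lcp_len A A' = ?q" using lcp_len_eq_track_len[of \<gamma> A A'] lt1 lt2 by simp
  have e1: "red (winv A @ B) = winv (drop ?q A) @ drop ?q B"
    using red_winv_append_lcp[OF rA rB] c1 by simp
  have e2: "red (winv A @ A') = winv (drop ?q A) @ drop ?q A'"
    using red_winv_append_lcp[OF rA rA'] c2 by simp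
  have "?p - ?q \<le> lcp_len (drop ?q A') (drop ?q B)"
  proof -
    have tB: "take ?p B = itake \<gamma> ?p" and lpB: "?p \<le> length B"
      using track_len_ge_iff[of ?p \<gamma> B] by auto
    have tA: "take ?p A' = itake \<gamma> ?p" and lpA: "?p \<le> length A'"
      using track_len_ge_iff[of ?p \<gamma> A'] lt2 by auto
    have "take (?p - ?q) (drop ?q B) = drop ?q (take ?p B)" using lt1 by (simp add: take_drop)
    moreover have "take (?p - ?q) (drop ?q A') = drop ?q (take ?p A')"
      using lt1 by (simp add: take_drop)
    ultimately show ?thesis unfolding lcp_len_ge_iff using tA tB lpA lpB by (simp add: diff_le_mono)
  qed
  then have "length (drop ?q A) + (?p - ?q) \<le> lcp_len (red (winv A @ A')) (red (winv A @ B))"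
    unfolding e1 e2
      using lcp_len_append_same[of "winv (drop ?q A)" "drop ?q A'" "drop ?q B"] by simp
  moreover have "length (red (winv A @ B)) = length (drop ?q A) + length (drop ?q B)"
    using e1 by simp
  moreover have "?q \<le> length A" using track_len_le by blast
  ultimately show ?thesis using lB lt1 by simp
qed

definition tracks :: "('a \<Rightarrow> 'a word) \<Rightarrow> (nat \<Rightarrow> 'a letter) \<Rightarrow> (nat \<Rightarrow> 'a letter) \<Rightarrow> nat \<Rightarrow> bool" where
  "tracks \<phi> h \<gamma> C \<longleftrightarrow> (\<forall>k i. i + C < length (hom \<phi> (itake h k)) \<longrightarrow> \<gamma> i = hom \<phi> (itake h k) ! i)"

lemma tracks_hom_ext_seq:
  assumes "inj_endo f" "valid (Inf h)" "cancel_const f \<le> C"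
  shows "tracks f h (hom_ext_seq f h) C"
  unfolding tracks_def
proof (intro allI impI)
  fix k i assume "i + C < length (hom f (itake h k))"
  then have "i + cancel_const f < length (hom f (fw_take (Inf h) k))" using assms(3) by simp
  from letter_at_hom_ext[OF assms(1,2) this] show "hom_ext_seq f h i = hom f (itake h k) ! i"
    using hom_ext_Inf[OF assms(2), of f] by simp
qed

lemma length_le_track_len:
  assumes "tracks \<phi> h \<gamma> C"
  shows "length (hom \<phi> (itake h k)) \<le> track_len \<gamma> (hom \<phi> (itake h k)) + C"
proof -
  let ?w = "hom \<phi> (itake h k)"
  let ?n = "length ?w - C"
  have "take ?n ?w = itake \<gamma> ?n"
  proof (rule nth_equalityI)
    show "length (take ?n ?w) = length (itake \<gamma> ?n)" by simp
    fix i assume "i < length (take ?n ?w)"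
    then have "i + C < length ?w" by simp
    then show "take ?n ?w ! i = itake \<gamma> ?n ! i" using assms unfolding tracks_def by auto
  qed
  then have "?n \<le> track_len \<gamma> ?w" unfolding track_len_ge_iff by simp
  then show ?thesis by simp
qed

lemma length_defect_le_if_track_len_eq:
  assumes "tracks f h \<gamma> C" "tracks g h \<gamma> C"
    and "track_len \<gamma> (hom g (itake h k)) = track_len \<gamma> (hom f (itake h k))"
  shows "length (defect f g (itake h k)) \<le> 2 * C"
proof -
  let ?P = "hom f (itake h k)" and ?Q = "hom g (itake h k)"
  have "track_len \<gamma> ?Q \<le> lcp_len ?Q ?P"
    using min_track_len_le_lcp_len[of \<gamma> ?Q ?P] assms(3) by simp
  moreover have "length ?P \<le> track_len \<gamma> ?P + C" "length ?Q \<le> track_len \<gamma> ?Q + C"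
    using length_le_track_len assms(1,2) by blast+
  moreover have "lcp_len ?Q ?P \<le> length ?Q" "lcp_len ?Q ?P \<le> length ?P"
    using lcp_len_le1 lcp_len_le2 by blast+
  ultimately show ?thesis unfolding length_defect using assms(3) by linarith
qed

lemma length_hom_itake_Suc:
  shows "length (hom f (itake h (Suc k))) \<le> length (hom f (itake h k)) + img_size f"
    and "length (hom f (itake h k)) \<le> length (hom f (itake h (Suc k))) + img_size f"
proof -
  have e: "hom f (itake h (Suc k)) = red (hom f (itake h k) @ hom f [h k])"
    by (simp add: itake_Suc hom_append)
  show "length (hom f (itake h (Suc k))) \<le> length (hom f (itake h k)) + img_size f"
    unfolding e using length_red_le[of "hom f (itake h k) @ hom f [h k]"]
      length_hom_single_le[of f "h k"]
      by simp
  show "length (hom f (itake h k)) \<le> length (hom f (itake h (Suc k))) + img_size f"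
    unfolding e using length_red_append_ge[of "hom f (itake h k)" "hom f [h k]"]
      length_hom_single_le[of f "h k"]
      by simp
qed

lemma red_winv_hom_itake_append: "k \<le> K \<Longrightarrow> red (winv (hom \<phi> (itake h k)) @ hom \<phi> (itake h K))
    = hom \<phi> (itake (idrop h k) (K - k))"
proof -
  assume kK: "k \<le> K"
  have "red (winv (hom \<phi> (itake h k)) @ hom \<phi> (itake h K)) = hom \<phi> (winv (itake h k) @ itake h K)"
    by (simp add: hom_append hom_winv)
  also have "\<dots> = hom \<phi> (winv (itake h k) @ itake h k @ itake (idrop h k) (K - k))"
    by (subst itake_split[OF kK, of h]) (rule refl)
  also have "\<dots> = hom \<phi> (itake (idrop h k) (K - k))" by (rule hom_winv_append_cancel)
  finally show ?thesis .
qed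

lemma tail_image_shares_defect:
  fixes \<phi>1 \<phi>2 :: "'a::finite \<Rightarrow> 'a word"
  assumes inj1: "inj_endo \<phi>1" and v: "valid (Inf h)" and a1: "tracks \<phi>1 h \<gamma> C"
    and a2: "tracks \<phi>2 h \<gamma> C"
    and lt: "track_len \<gamma> (hom \<phi>1 (itake h k)) < track_len \<gamma> (hom \<phi>2 (itake h k))"
  shows "\<exists>m\<ge>1. length (defect \<phi>2 \<phi>1 (itake h k)) - C
      \<le> lcp_len (hom \<phi>1 (itake (idrop h k) m)) (defect \<phi>2 \<phi>1 (itake h k))"
proof -
  define p where "p = track_len \<gamma> (hom \<phi>2 (itake h k))"
  define K where "K = k + 1 + long_len \<phi>1 (p + C)"
  have "p + C + cancel_const \<phi>1 < length (hom \<phi>1 (itake h K))"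
    using cancel_const_less_length_hom[OF inj1 reduced_itake[OF v], of "p + C" K]
      by (simp add: K_def)
  then have "p < track_len \<gamma> (hom \<phi>1 (itake h K))"
    using length_le_track_len[OF a1, of K] by simp
  then have sh: "length (defect \<phi>2 \<phi>1 (itake h k)) - C
      \<le> lcp_len (red (winv (hom \<phi>1 (itake h k)) @ hom \<phi>1 (itake h K))) (defect \<phi>2 \<phi>1 (itake h k))"
    using red_winv_append_shared_prefix[OF hom_reduced[of \<phi>1 "itake h k"] hom_reduced[of \<phi>2 "itake h k"]
        hom_reduced[of \<phi>1 "itake h K"] lt, of C]
      length_le_track_len[OF a2, of k]
    by (simp add: p_def defect_def)
  have "red (winv (hom \<phi>1 (itake h k)) @ hom \<phi>1 (itake h K)) = hom \<phi>1 (itake (idrop h k) (K - k))"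
    by (rule red_winv_hom_itake_append) (simp add: K_def)
  then show ?thesis using sh by (intro exI[of _ "K - k"]) (simp add: K_def)
qed

text \<open>If the tails of h after k and of h' after k' begin with different letters, their images share
  at most C letters by bounded cancellation, yet both begin with all but C letters of the common
  defect.\<close>
lemma length_defect_le_if_tails_differ:
  fixes \<phi>1 \<phi>2 :: "'a::finite \<Rightarrow> 'a word"
  assumes inj1: "inj_endo \<phi>1" and cb1: "bounded_cancellation \<phi>1 C"
    and v: "valid (Inf h)" and v': "valid (Inf h')"
    and a1: "tracks \<phi>1 h \<gamma> C" and a2: "tracks \<phi>2 h \<gamma> C"
    and a1': "tracks \<phi>1 h' \<gamma>' C" and a2': "tracks \<phi>2 h' \<gamma>' C"
    and lt: "track_len \<gamma> (hom \<phi>1 (itake h k)) < track_len \<gamma> (hom \<phi>2 (itake h k))"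
    and lt': "track_len \<gamma>' (hom \<phi>1 (itake h' k')) < track_len \<gamma>' (hom \<phi>2 (itake h' k'))"
    and eqz: "defect \<phi>2 \<phi>1 (itake h k) = defect \<phi>2 \<phi>1 (itake h' k')"
    and neq: "h k \<noteq> h' k'"
  shows "length (defect \<phi>2 \<phi>1 (itake h k)) \<le> 2 * C"
proof -
  define z where "z = defect \<phi>2 \<phi>1 (itake h k)"
  obtain m where m: "m \<ge> 1" "length z - C \<le> lcp_len (hom \<phi>1 (itake (idrop h k) m)) z"
    using tail_image_shares_defect[OF inj1 v a1 a2 lt] by (auto simp: z_def)
  obtain m' where m': "m' \<ge> 1" "length z - C \<le> lcp_len (hom \<phi>1 (itake (idrop h' k') m')) z"
    using tail_image_shares_defect[OF inj1 v' a1' a2' lt'] eqz by (auto simp: z_def)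
  define a where "a = itake (idrop h k) m"
  define b where "b = itake (idrop h' k') m'"
  have ra: "reduced a" "reduced b"
    using reduced_itake[OF valid_idrop[OF v]] reduced_itake[OF valid_idrop[OF v']]
      by (auto simp: a_def b_def)
  have "length a \<ge> 1" "length b \<ge> 1" using m(1) m'(1) by (simp_all add: a_def b_def)
  then have ne: "a \<noteq> []" "b \<noteq> []" by auto
  have "hd a = h k" using hd_itake[of m "idrop h k"] m(1) by (simp add: a_def idrop_def)
  moreover have "hd b = h' k'"
    using hd_itake[of m' "idrop h' k'"] m'(1) by (simp add: b_def idrop_def)
  ultimately have "hd b \<noteq> inv1 (last (winv a))" using neq ne by (simp add: last_winv)
  then have rab: "reduced (winv a @ b)" using ra ne by (simp add: reduced_append)
  have "lcp_len (hom \<phi>1 a) (hom \<phi>1 b) \<le> C"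
    by (rule bounded_cancellation_lcp_branches[OF cb1 rab])
  moreover have "min (lcp_len (hom \<phi>1 a) z) (lcp_len z (hom \<phi>1 b)) \<le> lcp_len (hom \<phi>1 a) (hom \<phi>1 b)"
    by (rule lcp_len_min_le)
  moreover have "lcp_len z (hom \<phi>1 b) = lcp_len (hom \<phi>1 b) z" by (rule lcp_len_commute)
  ultimately have "length z - C \<le> C" using m(2) m'(2) by (simp add: a_def b_def)
  then show ?thesis by (simp add: z_def)
qed

section \<open>Regular points\<close>

definition cancel_const2 :: "('a::finite \<Rightarrow> 'a word) \<Rightarrow> ('a \<Rightarrow> 'a word) \<Rightarrow> nat" where
  "cancel_const2 f g = max (cancel_const f) (cancel_const g)"

definition img_size2 :: "('a::finite \<Rightarrow> 'a word) \<Rightarrow> ('a \<Rightarrow> 'a word) \<Rightarrow> nat" where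
  "img_size2 f g = max (img_size f) (img_size g)"

definition defect_threshold :: "('a::finite \<Rightarrow> 'a word) \<Rightarrow> ('a \<Rightarrow> 'a word) \<Rightarrow> nat" where
  "defect_threshold f g = 2 * img_size2 f g + 4 * cancel_const2 f g + 1"

text \<open>For a regular point the images of h under the extensions of f and g coincide, and
  hom_ext_seq f h is this common image.\<close>
definition g_behind ::
  "('a::finite \<Rightarrow> 'a word) \<Rightarrow> ('a \<Rightarrow> 'a word) \<Rightarrow> (nat \<Rightarrow> 'a letter) \<Rightarrow> nat \<Rightarrow> bool" where
  "g_behind f g h k \<longleftrightarrow> track_len (hom_ext_seq f h) (hom g (itake h k))
      < track_len (hom_ext_seq f h) (hom f (itake h k))"

text \<open>Images of consecutive prefixes differ in length by at most L, and each image follows \<gamma> up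
  to its last C letters; so if the order of the two track lengths flipped between k and Suc k, the
  defect at k would have length below 2 L + 4 C.\<close>
lemma g_behind_Suc_iff:
  fixes f g :: "'a::finite \<Rightarrow> 'a word"
  assumes af: "tracks f h \<gamma> (cancel_const2 f g)" and ag: "tracks g h \<gamma> (cancel_const2 f g)"
    and big: "length (defect f g (itake h k)) > defect_threshold f g"
      "length (defect f g (itake h (Suc k))) > defect_threshold f g"
  shows "(track_len \<gamma> (hom g (itake h (Suc k))) < track_len \<gamma> (hom f (itake h (Suc k))))
      = (track_len \<gamma> (hom g (itake h k)) < track_len \<gamma> (hom f (itake h k)))"
proof -
  define C where "C = cancel_const2 f g"
  define L where "L = img_size2 f g"
  let ?P = "hom f (itake h k)" and ?Q = "hom g (itake h k)"
  let ?P' = "hom f (itake h (Suc k))" and ?Q' = "hom g (itake h (Suc k))"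
  define p where "p = track_len \<gamma> ?P"
  define q where "q = track_len \<gamma> ?Q"
  define p' where "p' = track_len \<gamma> ?P'"
  define q' where "q' = track_len \<gamma> ?Q'"
  have threshold: "defect_threshold f g = 2 * L + 4 * C + 1"
    by (simp add: defect_threshold_def C_def L_def)
  have ne: "p \<noteq> q" "p' \<noteq> q'"
    using length_defect_le_if_track_len_eq[OF af ag, of k]
      length_defect_le_if_track_len_eq[OF af ag, of "Suc k"] big
    unfolding p_def q_def p'_def q'_def defect_threshold_def by auto
  have b1: "length ?P \<le> p + C" "length ?Q \<le> q + C" "length ?P' \<le> p' + C" "length ?Q' \<le> q' + C"
    using length_le_track_len[OF af] length_le_track_len[OF ag]
      by (auto simp: p_def q_def p'_def q'_def C_def)
  have b2: "p \<le> length ?P" "q \<le> length ?Q" "p' \<le> length ?P'" "q' \<le> length ?Q'"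
    using track_len_le by (auto simp: p_def q_def p'_def q'_def)
  have b3: "length ?P' \<le> length ?P + L" "length ?P \<le> length ?P' + L"
    "length ?Q' \<le> length ?Q + L" "length ?Q \<le> length ?Q' + L"
    using length_hom_itake_Suc[of f h k] length_hom_itake_Suc[of g h k]
      by (auto simp: L_def img_size2_def)
  have lc: "lcp_len ?Q ?P = min q p"
    using lcp_len_eq_min_track_len[of \<gamma> ?Q ?P] ne by (simp add: p_def q_def)
  have z: "length (defect f g (itake h k)) + 2 * min q p = length ?Q + length ?P"
    unfolding length_defect lc[symmetric] using lcp_len_le1[of ?Q ?P] lcp_len_le2[of ?Q ?P] by simp
  have "(q' < p') = (q < p)"
  proof (rule ccontr)
    assume "(q' < p') \<noteq> (q < p)"
    then consider "q < p" "p' < q'" | "p < q" "q' < p'"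
      using ne unfolding p_def q_def p'_def q'_def by linarith
    then have "length (defect f g (itake h k)) < 2 * L + 4 * C"
      by cases (use z b1 b2 b3 in \<open>simp add: min_def; linarith\<close>)+
    then show False using big threshold by linarith
  qed
  then show ?thesis by (simp add: p_def q_def p'_def q'_def)
qed

text \<open>Only finitely many prefixes of a regular point have defect of length at most the threshold
  (lemma finite_short_defect), so the maximum below is meaningful; for other sequences the value
  is junk.\<close>
definition stable_index :: "('a::finite \<Rightarrow> 'a word) \<Rightarrow> ('a \<Rightarrow> 'a word) \<Rightarrow> (nat \<Rightarrow> 'a letter) \<Rightarrow> nat" where
  "stable_index f g h = Suc (Max {k. length (defect f g (itake h k)) \<le> defect_threshold f g})"

definition regular_seq :: "('a::finite \<Rightarrow> 'a word) \<Rightarrow> ('a \<Rightarrow> 'a word) \<Rightarrow> (nat \<Rightarrow> 'a letter) \<Rightarrow> bool" where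
  "regular_seq f g h \<longleftrightarrow> valid (Inf h) \<and> hom_ext_seq f h = hom_ext_seq g h
      \<and> Inf h \<notin> Ttop closure_of (Fin ` Eq f g)"

definition orbit_code ::
  "('a::finite \<Rightarrow> 'a word) \<Rightarrow> ('a \<Rightarrow> 'a word) \<Rightarrow> (nat \<Rightarrow> 'a letter) \<Rightarrow> 'a word \<times> bool" where
  "orbit_code f g h
      = (defect f g (itake h (stable_index f g h)), g_behind f g h (stable_index f g h))"

context
  fixes f g :: "'a::finite \<Rightarrow> 'a word"
  assumes injf: "inj_endo f" and injg: "inj_endo g"
begin

lemma bounded_cancellation_both: "bounded_cancellation f (cancel_const2 f g)"
  "bounded_cancellation g (cancel_const2 f g)"
  using bounded_cancellation_mono[OF bounded_cancellation_cancel_const[OF injf]]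
    bounded_cancellation_mono[OF bounded_cancellation_cancel_const[OF injg]]
    by (auto simp: cancel_const2_def)

lemma tracks_both:
  assumes "regular_seq f g h"
  shows "tracks f h (hom_ext_seq f h) (cancel_const2 f g)"
    "tracks g h (hom_ext_seq f h) (cancel_const2 f g)"
  using tracks_hom_ext_seq[OF injf, of h "cancel_const2 f g"]
    tracks_hom_ext_seq[OF injg, of h "cancel_const2 f g"] assms
  by (auto simp: regular_seq_def cancel_const2_def)

lemma Fin_notin_regular: "Fin w \<notin> regular f g"
proof
  assume a: "Fin w \<in> regular f g"
  then have "reduced w" by (simp add: regular_def EqHat_def hatF_def)
  then have "w \<in> Eq f g"
    using a by (simp add: regular_def EqHat_def hatHom_eq_hom_ext[OF injf] hatHom_eq_hom_ext[OF injg]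
        hom_ext_Fin Eq_def FG_def)
  moreover have "Fin ` Eq f g \<subseteq> topspace Ttop"
    unfolding Ttop_def Metric_space.topspace_mtopology[OF Metric_space_hatF]
    by (auto simp: Eq_def FG_def hatF_def)
  ultimately have "Fin w \<in> Ttop closure_of (Fin ` Eq f g)" using closure_of_subset by blast
  then show False using a by (simp add: regular_def)
qed

lemma regular_eq: "regular f g = Inf ` {h. regular_seq f g h}"
proof (intro equalityI subsetI)
  fix \<alpha> assume a: "\<alpha> \<in> regular f g"
  then obtain h where h: "\<alpha> = Inf h" using Fin_notin_regular by (cases \<alpha>) auto
  with a show "\<alpha> \<in> Inf ` {h. regular_seq f g h}"
    by (auto simp: regular_def EqHat_def hatF_def regular_seq_def hatHom_eq_hom_ext[OF injf]
        hatHom_eq_hom_ext[OF injg] hom_ext_Inf)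
next
  fix \<alpha> assume "\<alpha> \<in> Inf ` {h. regular_seq f g h}"
  then show "\<alpha> \<in> regular f g"
    by (auto simp: regular_def EqHat_def hatF_def regular_seq_def hatHom_eq_hom_ext[OF injf]
        hatHom_eq_hom_ext[OF injg] hom_ext_Inf)
qed

lemma finite_same_defect:
  assumes "regular_seq f g h"
  shows "finite {j. defect f g (itake h j) = defect f g (itake h i)}"
proof (rule ccontr)
  assume inf: "infinite {j. defect f g (itake h j) = defect f g (itake h i)}"
  have v: "valid (Inf h)" using assms by (simp add: regular_seq_def)
  have "\<exists>w\<in>Eq f g. agree (Fin w) (Inf h) n" for n
  proof -
    obtain j where j: "j \<in> {j. defect f g (itake h j) = defect f g (itake h i)}" "i + n \<le> j"
      using inf unfolding infinite_nat_iff_unbounded_le by blast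
    have "mult (itake h j) (winv (itake h i)) \<in> Eq f g"
      using mult_winv_in_Eq_if_defect_eq[OF reduced_itake[OF v] reduced_itake[OF v]] j(1) by simp
    moreover have "agree (Fin (mult (itake h j) (winv (itake h i)))) (Inf h) n"
      using agree_mult_itake_winv_itake[OF v, of i j] j(2) agree_mono by fastforce
    ultimately show ?thesis by blast
  qed
  then have "Inf h \<in> Ttop closure_of (Fin ` Eq f g)"
    using Inf_in_closure_of_Fin[OF v] by (auto simp: Eq_def)
  then show False using assms by (simp add: regular_seq_def)
qed

lemma finite_short_defect:
  assumes "regular_seq f g h"
  shows "finite {k. length (defect f g (itake h k)) \<le> T}"
proof -
  have fin: "finite {v :: 'a word. set v \<subseteq> UNIV \<and> length v \<le> T}"
    by (rule finite_lists_length_le) simp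
  have "{k. length (defect f g (itake h k)) \<le> T}
      \<subseteq> (\<Union>v\<in>{v. set v \<subseteq> UNIV \<and> length v \<le> T}. {k. defect f g (itake h k) = v})"
    by auto
  moreover have "finite {k. defect f g (itake h k) = v}" for v
  proof (cases "\<exists>i. defect f g (itake h i) = v")
    case True
    then obtain i where "defect f g (itake h i) = v" by blast
    then show ?thesis using finite_same_defect[OF assms, of i] by simp
  next
    case False then show ?thesis by simp
  qed
  ultimately show ?thesis using fin by (meson finite_UN_I finite_subset)
qed

lemma defect_threshold_less_length_defect:
  assumes "regular_seq f g h" "stable_index f g h \<le> k"
  shows "defect_threshold f g < length (defect f g (itake h k))"
proof (rule ccontr)
  define S where "S = {k. length (defect f g (itake h k)) \<le> defect_threshold f g}"
  assume "\<not> ?thesis"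
  then have "k \<in> S" by (simp add: S_def)
  then have "k \<le> Max S" using Max_ge finite_short_defect[OF assms(1)] by (simp add: S_def)
  then show False using assms(2) by (simp add: stable_index_def S_def)
qed

lemma length_defect_stable_index_le:
  assumes "regular_seq f g h"
  shows "length (defect f g (itake h (stable_index f g h))) \<le> defect_threshold f g
      + 2 * img_size2 f g"
proof -
  define S where "S = {k. length (defect f g (itake h k)) \<le> defect_threshold f g}"
  have fS: "finite S" using finite_short_defect[OF assms] by (simp add: S_def)
  have si: "stable_index f g h = Suc (Max S)" by (simp add: stable_index_def S_def)
  have "0 \<in> S" by (simp add: S_def)
  then have "Max S \<in> S" using Max_in[OF fS] by blast
  then have "length (defect f g (itake h (Max S))) \<le> defect_threshold f g" by (simp add: S_def)
  moreover have "length (defect f g (itake h (Max S) @ [h (Max S)]))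
      \<le> length (defect f g (itake h (Max S))) + 2 * img_size2 f g"
    using length_defect_snoc_le by (simp add: img_size2_def)
  ultimately show ?thesis by (simp add: si itake_Suc)
qed

lemma g_behind_stable:
  assumes "regular_seq f g h"
  shows "g_behind f g h (stable_index f g h + n) = g_behind f g h (stable_index f g h)"
proof (induction n)
  case 0 then show ?case by simp
next
  case (Suc n)
  have "g_behind f g h (Suc (stable_index f g h + n)) = g_behind f g h (stable_index f g h + n)"
    unfolding g_behind_def
    by (rule g_behind_Suc_iff[OF tracks_both[OF assms]])
      (use defect_threshold_less_length_defect[OF assms] in auto)
  then show ?case using Suc by simp
qed

lemma track_len_neq:
  assumes "regular_seq f g h" "stable_index f g h \<le> k"
  shows "track_len (hom_ext_seq f h) (hom g (itake h k))
      \<noteq> track_len (hom_ext_seq f h) (hom f (itake h k))"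
proof
  assume "track_len (hom_ext_seq f h) (hom g (itake h k))
      = track_len (hom_ext_seq f h) (hom f (itake h k))"
  then have "length (defect f g (itake h k)) \<le> 2 * cancel_const2 f g"
    using length_defect_le_if_track_len_eq[OF tracks_both[OF assms(1)]] by blast
  then show False
    using defect_threshold_less_length_defect[OF assms] by (simp add: defect_threshold_def)
qed

lemma letters_eq_if_same_defect:
  assumes gh: "regular_seq f g h" and gh': "regular_seq f g h'"
    and k: "stable_index f g h \<le> k" and k': "stable_index f g h' \<le> k'"
    and ez: "defect f g (itake h k) = defect f g (itake h' k')"
    and es: "g_behind f g h k = g_behind f g h' k'"
  shows "h k = h' k'"
proof (rule ccontr)
  assume ne: "h k \<noteq> h' k'"
  have v: "valid (Inf h)" "valid (Inf h')" using gh gh' by (auto simp: regular_seq_def)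
  have "length (defect f g (itake h k)) \<le> 2 * cancel_const2 f g"
  proof (cases "g_behind f g h k")
    case True
    then have "track_len (hom_ext_seq f h) (hom g (itake h k))
        < track_len (hom_ext_seq f h) (hom f (itake h k))"
      and "track_len (hom_ext_seq f h') (hom g (itake h' k'))
          < track_len (hom_ext_seq f h') (hom f (itake h' k'))"
      using es by (simp_all add: g_behind_def)
    then show ?thesis
      by (rule length_defect_le_if_tails_differ[OF injg bounded_cancellation_both(2) v
          tracks_both(2)[OF gh] tracks_both(1)[OF gh] tracks_both(2)[OF gh'] tracks_both(1)[OF gh']
          _ _ ez ne])
  next
    case False
    then have "track_len (hom_ext_seq f h) (hom f (itake h k))
        < track_len (hom_ext_seq f h) (hom g (itake h k))"
      and "track_len (hom_ext_seq f h') (hom f (itake h' k'))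
          < track_len (hom_ext_seq f h') (hom g (itake h' k'))"
      using es track_len_neq[OF gh k] track_len_neq[OF gh' k'] by (auto simp: g_behind_def)
    moreover have "defect g f (itake h k) = defect g f (itake h' k')"
      using ez by (simp add: defect_swap[where f=f and g=g])
    ultimately have "length (defect g f (itake h k)) \<le> 2 * cancel_const2 f g"
      by (rule length_defect_le_if_tails_differ[OF injf bounded_cancellation_both(1) v
          tracks_both(1)[OF gh] tracks_both(2)[OF gh] tracks_both(1)[OF gh'] tracks_both(2)[OF gh']
          _ _ _ ne])
    then show ?thesis by (simp add: defect_swap[where f=f and g=g])
  qed
  then show False
    using defect_threshold_less_length_defect[OF gh k] by (simp add: defect_threshold_def)
qed

lemma idrop_stable_index_eq:
  assumes gh: "regular_seq f g h" and gh': "regular_seq f g h'"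
    and code: "orbit_code f g h = orbit_code f g h'"
  shows "idrop h (stable_index f g h) = idrop h' (stable_index f g h')"
proof -
  define i where "i = stable_index f g h"
  define j where "j = stable_index f g h'"
  have "h (i + n) = h' (j + n)" for n
  proof (induction n rule: less_induct)
    case (less n)
    then have "itake (idrop h i) n = itake (idrop h' j) n"
      by (intro nth_equalityI) (auto simp: idrop_def)
    then have "defect f g (itake h (i + n)) = defect f g (itake h' (j + n))"
      using code by (simp add: orbit_code_def itake_add defect_append i_def j_def)
    moreover have "g_behind f g h (i + n) = g_behind f g h' (j + n)"
      using code g_behind_stable[OF gh, of n] g_behind_stable[OF gh', of n]
      by (simp add: orbit_code_def i_def j_def)
    ultimately show ?case
      using letters_eq_if_same_defect[OF gh gh', of "i + n" "j + n"] by (simp add: i_def j_def)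
  qed
  then show ?thesis by (auto simp: idrop_def i_def j_def)
qed

lemma orbit_eq_if_orbit_code_eq:
  assumes gh: "regular_seq f g h" and gh': "regular_seq f g h'"
    and code: "orbit_code f g h = orbit_code f g h'"
  shows "orbit f g (Inf h) = orbit f g (Inf h')"
proof -
  define i where "i = stable_index f g h"
  define j where "j = stable_index f g h'"
  have v: "valid (Inf h)" "valid (Inf h')" using gh gh' by (auto simp: regular_seq_def)
  define w where "w = mult (itake h' j) (winv (itake h i))"
  have wE: "w \<in> Eq f g" unfolding w_def
    by (rule mult_winv_in_Eq_if_defect_eq[OF reduced_itake[OF v(1)] reduced_itake[OF v(2)]])
      (use code in \<open>simp add: orbit_code_def i_def j_def\<close>)
  have "act w (Inf h) = act (itake h' j) (Inf (idrop h i))"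
    unfolding w_def act_mult[OF v(1)] act_winv_itake[OF v(1)] ..
  also have "\<dots> = Inf h'"
    using act_prepend[of "itake h' j" "idrop h' j"] v(2) valid_idrop[OF v(2)]
      idrop_stable_index_eq[OF gh gh' code] by (simp add: prepend_itake_idrop i_def j_def)
  finally show ?thesis using orbit_act_eq[OF v(1) wE] by simp
qed

lemma orbit_code_bounded:
  "orbit_code f g ` {h. regular_seq f g h}
     \<subseteq> {v. set v \<subseteq> UNIV \<and> length v \<le> defect_threshold f g + 2 * img_size2 f g} \<times> UNIV"
  using length_defect_stable_index_le by (auto simp: orbit_code_def)

end

theorem theorem2p3:
  fixes f g :: "'a::finite \<Rightarrow> 'a word"
  assumes "inj_endo f" and "inj_endo g"
  shows "finite (orbit f g ` regular f g)"
proof -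
  have "finite (orbit_code f g ` {h. regular_seq f g h})"
    by (rule finite_subset[OF orbit_code_bounded[OF assms]])
      (intro finite_cartesian_product finite_lists_length_le; simp)
  then have "finite ((\<lambda>h. orbit f g (Inf h)) ` {h. regular_seq f g h})"
    by (rule finite_image_if_factors) (use orbit_eq_if_orbit_code_eq[OF assms] in blast)
  then show ?thesis by (simp add: regular_eq[OF assms] image_image)
qed

end
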